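(* Let $D$ be an associative division algebra finite-dimensional over its center $F$, let $\sigma\in\mathrm{Aut}(D)$ be such that $\sigma|_F$ has finite order $m$, let $F_0=\mathrm{Fix}(\sigma)\cap F$, let $d\in D\setminus F_0$ and $A=(D,\sigma,d)$. Suppose $F_0$ contains a primitive $m$th root of unity. If $f(t)=t^m-d\in D[t;\sigma]$ is irreducible, then $A$ is a nonassociative cyclic extension of $D$ of degree $m$. In particular, if $m$ is prime and $d\neq\sigma^{m-1}(z)\cdots\sigma(z)z$ for all $z\in D$, then $A$ is a nonassociative cyclic extension of $D$ of degree $m$.
   Context: $D[t;\sigma]$ is the twisted polynomial ring: polynomials $\sum a_it^i$ ($a_i\in D$), multiplication determined by $ta=\sigma(a)t$; $f$ is irreducible if it is not a unit and is not a product $gh$ of two non-units. For $d\in D^\times$, $(D,\sigma,d)$ is the set of polynomials of degree $<m$ in $D[t;\sigma]$ with multiplication $g\circ h=$ remainder of $gh$ on right division by $t^m-d$; it is a unital algebra over $F_0$ containing $D$. Definition: if $A$ is a nonassociative division algebra (left and right multiplication by every nonzero element bijective) and $D\subseteq A$ an associative division subalgebra, $A$ is a nonassociative cyclic extension of $D$ of degree $m$ if $A$ is a free left $D$-module of rank $m$ and $\mathrm{Aut}(A)$ has a cyclic subgroup $G$ of order $m$ with $H|_D=\mathrm{id}_D$ for all $H\in G$. *)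

theory Defs
  imports "HOL-Computational_Algebra.Primes"
begin

definition center :: "'a::division_ring set" where
  "center = {x. \<forall>y. x * y = y * x}"

definition fin_dim_over_center :: "'a::division_ring itself \<Rightarrow> bool" where
  "fin_dim_over_center _ \<longleftrightarrow>
     (\<exists>B::'a set. finite B \<and>
        (\<forall>x. \<exists>c. (\<forall>b\<in>B. c b \<in> center) \<and> x = (\<Sum>b\<in>B. c b * b)))"

definition ring_aut :: "('a::division_ring \<Rightarrow> 'a) \<Rightarrow> bool" where
  "ring_aut \<sigma> \<longleftrightarrow> bij \<sigma> \<and> (\<forall>x y. \<sigma> (x + y) = \<sigma> x + \<sigma> y)
      \<and> (\<forall>x y. \<sigma> (x * y) = \<sigma> x * \<sigma> y) \<and> \<sigma> 1 = 1"

definition order_on_center :: "('a::division_ring \<Rightarrow> 'a) \<Rightarrow> nat \<Rightarrow> bool" where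
  "order_on_center \<sigma> m \<longleftrightarrow> 0 < m \<and> (\<forall>x\<in>center. (\<sigma>^^m) x = x)
      \<and> (\<forall>k. 0 < k \<and> k < m \<longrightarrow> (\<exists>x\<in>center. (\<sigma>^^k) x \<noteq> x))"

definition fixed_center :: "('a::division_ring \<Rightarrow> 'a) \<Rightarrow> 'a set" where
  "fixed_center \<sigma> = {x \<in> center. \<sigma> x = x}"

definition primitive_root :: "nat \<Rightarrow> 'a::division_ring \<Rightarrow> bool" where
  "primitive_root m w \<longleftrightarrow> w ^ m = 1 \<and> (\<forall>k. 0 < k \<and> k < m \<longrightarrow> w ^ k \<noteq> 1)"

fun twisted_norm :: "('a::division_ring \<Rightarrow> 'a) \<Rightarrow> nat \<Rightarrow> 'a \<Rightarrow> 'a" where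
  "twisted_norm \<sigma> 0 z = 1"
| "twisted_norm \<sigma> (Suc k) z = (\<sigma>^^k) z * twisted_norm \<sigma> k z"

(* A twisted polynomial sum a_i t^i is represented by its coefficient function,
   which must have finite support. *)
definition tpoly :: "(nat \<Rightarrow> 'a::division_ring) \<Rightarrow> bool" where
  "tpoly f \<longleftrightarrow> finite {n. f n \<noteq> 0}"

definition tp_add :: "(nat \<Rightarrow> 'a::division_ring) \<Rightarrow> (nat \<Rightarrow> 'a) \<Rightarrow> nat \<Rightarrow> 'a" where
  "tp_add f g = (\<lambda>n. f n + g n)"

(* (a t^i)(b t^j) = a sigma^i(b) t^(i+j) *)
definition tp_mul :: "('a::division_ring \<Rightarrow> 'a) \<Rightarrow> (nat \<Rightarrow> 'a) \<Rightarrow> (nat \<Rightarrow> 'a) \<Rightarrow> nat \<Rightarrow> 'a" where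
  "tp_mul \<sigma> f g = (\<lambda>n. \<Sum>i\<le>n. f i * (\<sigma>^^i) (g (n - i)))"

definition tp_const :: "'a::division_ring \<Rightarrow> nat \<Rightarrow> 'a" where
  "tp_const c = (\<lambda>n. if n = 0 then c else 0)"

definition tp_unit :: "('a::division_ring \<Rightarrow> 'a) \<Rightarrow> (nat \<Rightarrow> 'a) \<Rightarrow> bool" where
  "tp_unit \<sigma> f \<longleftrightarrow> tpoly f \<and>
     (\<exists>g. tpoly g \<and> tp_mul \<sigma> f g = tp_const 1 \<and> tp_mul \<sigma> g f = tp_const 1)"

definition tp_irreducible :: "('a::division_ring \<Rightarrow> 'a) \<Rightarrow> (nat \<Rightarrow> 'a) \<Rightarrow> bool" where
  "tp_irreducible \<sigma> f \<longleftrightarrow> tpoly f \<and> \<not> tp_unit \<sigma> f \<and>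
     (\<forall>g h. tpoly g \<and> tpoly h \<and> f = tp_mul \<sigma> g h \<longrightarrow> tp_unit \<sigma> g \<or> tp_unit \<sigma> h)"

definition tm_minus :: "nat \<Rightarrow> 'a::division_ring \<Rightarrow> nat \<Rightarrow> 'a" where
  "tm_minus m d = (\<lambda>n. (if n = m then 1 else 0) - (if n = 0 then d else 0))"

definition SA_carrier :: "nat \<Rightarrow> (nat \<Rightarrow> 'a::division_ring) set" where
  "SA_carrier m = {f. \<forall>n\<ge>m. f n = 0}"

definition tp_rrem :: "('a::division_ring \<Rightarrow> 'a) \<Rightarrow> nat \<Rightarrow> 'a \<Rightarrow> (nat \<Rightarrow> 'a) \<Rightarrow> nat \<Rightarrow> 'a" where
  "tp_rrem \<sigma> m d p = (THE r. r \<in> SA_carrier m \<and>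
       (\<exists>q. tpoly q \<and> p = tp_add (tp_mul \<sigma> q (tm_minus m d)) r))"

definition SA_mult :: "('a::division_ring \<Rightarrow> 'a) \<Rightarrow> nat \<Rightarrow> 'a \<Rightarrow> (nat \<Rightarrow> 'a) \<Rightarrow> (nat \<Rightarrow> 'a) \<Rightarrow> nat \<Rightarrow> 'a" where
  "SA_mult \<sigma> m d g h = tp_rrem \<sigma> m d (tp_mul \<sigma> g h)"

definition SA_division :: "('a::division_ring \<Rightarrow> 'a) \<Rightarrow> nat \<Rightarrow> 'a \<Rightarrow> bool" where
  "SA_division \<sigma> m d \<longleftrightarrow>
     (\<forall>a\<in>SA_carrier m. a \<noteq> (\<lambda>_. 0) \<longrightarrow>
        bij_betw (\<lambda>x. SA_mult \<sigma> m d a x) (SA_carrier m) (SA_carrier m) \<and>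
        bij_betw (\<lambda>x. SA_mult \<sigma> m d x a) (SA_carrier m) (SA_carrier m))"

(* A is a free left D-module of rank m (left D-action: multiplication by constants) *)
definition SA_free_rank :: "('a::division_ring \<Rightarrow> 'a) \<Rightarrow> nat \<Rightarrow> 'a \<Rightarrow> nat \<Rightarrow> bool" where
  "SA_free_rank \<sigma> m d r \<longleftrightarrow>
     (\<exists>b::nat \<Rightarrow> nat \<Rightarrow> 'a. (\<forall>i<r. b i \<in> SA_carrier m) \<and>
        (\<forall>x\<in>SA_carrier m. \<exists>!c::nat \<Rightarrow> 'a. (\<forall>i\<ge>r. c i = 0) \<and>
            x = (\<lambda>n. \<Sum>i<r. SA_mult \<sigma> m d (tp_const (c i)) (b i) n)))"

definition SA_aut :: "('a::division_ring \<Rightarrow> 'a) \<Rightarrow> nat \<Rightarrow> 'a \<Rightarrow> ((nat \<Rightarrow> 'a) \<Rightarrow> (nat \<Rightarrow> 'a)) \<Rightarrow> bool" where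
  "SA_aut \<sigma> m d H \<longleftrightarrow> bij_betw H (SA_carrier m) (SA_carrier m) \<and>
     (\<forall>x\<in>SA_carrier m. \<forall>y\<in>SA_carrier m.
        H (tp_add x y) = tp_add (H x) (H y) \<and>
        H (SA_mult \<sigma> m d x y) = SA_mult \<sigma> m d (H x) (H y)) \<and>
     (\<forall>c\<in>fixed_center \<sigma>. \<forall>x\<in>SA_carrier m.
        H (SA_mult \<sigma> m d (tp_const c) x) = SA_mult \<sigma> m d (tp_const c) (H x))"

definition nonassoc_cyclic_ext :: "('a::division_ring \<Rightarrow> 'a) \<Rightarrow> nat \<Rightarrow> 'a \<Rightarrow> bool" where
  "nonassoc_cyclic_ext \<sigma> m d \<longleftrightarrow>
     SA_division \<sigma> m d \<and> SA_free_rank \<sigma> m d m \<and>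
     (\<exists>H. SA_aut \<sigma> m d H \<and>
        (\<forall>k. \<forall>c. (H^^k) (tp_const c) = tp_const c) \<and>
        (\<forall>x\<in>SA_carrier m. (H^^m) x = x) \<and>
        (\<forall>k. 0 < k \<and> k < m \<longrightarrow> (\<exists>x\<in>SA_carrier m. (H^^k) x \<noteq> x)))"

end

theory Submission
  imports Defs "HOL-Computational_Algebra.Polynomial"
begin

text \<open>
  Twisted polynomials are modelled by ordinary polynomials with the skew multiplication
  \<open>(a t\<^sup>i)(b t\<^sup>j) = a \<sigma>\<^sup>i(b) t\<^sup>i\<^sup>+\<^sup>j\<close>; this ring has a right division algorithm, so its left ideals are
  principal.  If \<open>f = t\<^sup>m - d\<close> is irreducible, every nonzero \<open>x\<close> of degree \<open>< m\<close> satisfies a Bezout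
  identity \<open>u x + v f = 1\<close>, whence \<open>(D, \<sigma>, d)\<close> has no zero divisors.  By Artin's lemma \<open>F\<close>, and
  hence \<open>(D, \<sigma>, d)\<close>, is finite-dimensional over \<open>F\<^sub>0\<close>, and left and right multiplications are
  \<open>F\<^sub>0\<close>-linear, so injectivity gives bijectivity.  A primitive \<open>m\<close>-th root of unity \<open>w \<in> F\<^sub>0\<close>
  yields the automorphism \<open>t \<mapsto> w t\<close>, which fixes \<open>D\<close> and \<open>f\<close> and generates a cyclic group of
  order \<open>m\<close>.

  For prime \<open>m\<close>, let \<open>h\<close> be a right divisor of \<open>f\<close> of least positive degree \<open>k\<close>.  The least common
  left multiple of the conjugates of \<open>h\<close> under \<open>t \<mapsto> w t\<close> is invariant up to a scalar, which forces
  it to be \<open>f\<close>, and its degree is a multiple of \<open>k\<close>.  So \<open>k\<close> divides \<open>m\<close>; a reducible \<open>f\<close> then has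
  a right factor \<open>t - z\<close>, and dividing \<open>t\<^sup>m - d\<close> by it leaves \<open>\<sigma>\<^sup>m\<^sup>-\<^sup>1(z) \<cdots> z - d\<close>.
\<close>

section \<open>Twisted polynomials\<close>

locale ring_automorphism =
  fixes \<sigma> :: "'a::division_ring \<Rightarrow> 'a"
  assumes sigma_add: "\<And>x y. \<sigma> (x + y) = \<sigma> x + \<sigma> y"
    and sigma_mult: "\<And>x y. \<sigma> (x * y) = \<sigma> x * \<sigma> y"
    and sigma_one: "\<sigma> 1 = 1"
    and sigma_bij: "bij \<sigma>"
begin

lemma sigma_zero: "\<sigma> 0 = 0"
  using sigma_add[of 0 0] by simp

lemma sigma_pow_add: "(\<sigma>^^i) (x + y) = (\<sigma>^^i) x + (\<sigma>^^i) y"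
  by (induction i) (auto simp: sigma_add)

lemma sigma_pow_mult: "(\<sigma>^^i) (x * y) = (\<sigma>^^i) x * (\<sigma>^^i) y"
  by (induction i) (auto simp: sigma_mult)

lemma sigma_pow_zero [simp]: "(\<sigma>^^i) 0 = 0"
  by (induction i) (auto simp: sigma_zero)

lemma sigma_pow_one [simp]: "(\<sigma>^^i) 1 = 1"
  by (induction i) (auto simp: sigma_one)

lemma sigma_pow_uminus: "(\<sigma>^^i) (- x) = - (\<sigma>^^i) x"
  using sigma_pow_add[of i x "-x"] by (simp add: add.inverse_unique)

lemma sigma_pow_diff: "(\<sigma>^^i) (x - y) = (\<sigma>^^i) x - (\<sigma>^^i) y"
  using sigma_pow_add[of i x "-y"] by (simp add: sigma_pow_uminus)

lemma sigma_pow_nonzero: "x \<noteq> 0 \<Longrightarrow> (\<sigma>^^i) x \<noteq> 0"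
  using sigma_bij by (metis bij_is_inj inj_fn injD sigma_pow_zero)

lemma sigma_pow_sum: "(\<sigma>^^i) (sum f A) = (\<Sum>a\<in>A. (\<sigma>^^i) (f a))"
  by (induction A rule: infinite_finite_induct) (auto simp: sigma_pow_add)

lemma sigma_sum: "\<sigma> (sum f A) = (\<Sum>a\<in>A. \<sigma> (f a))"
  using sigma_pow_sum[of 1] by simp

definition tmult :: "'a poly \<Rightarrow> 'a poly \<Rightarrow> 'a poly" where
  "tmult p q = Abs_poly (\<lambda>n. \<Sum>i\<le>n. coeff p i * (\<sigma>^^i) (coeff q (n - i)))"

lemma twisted_convolution_high:
  assumes "degree p + degree q < n"
  shows "(\<Sum>i\<le>n. coeff p i * (\<sigma>^^i) (coeff q (n - i))) = 0"
proof (intro sum.neutral ballI)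
  fix i assume "i \<in> {..n}"
  show "coeff p i * (\<sigma>^^i) (coeff q (n - i)) = 0"
  proof (cases "degree p < i")
    case False
    then have "degree q < n - i" using assms by linarith
    then show ?thesis by (simp add: coeff_eq_0)
  qed (simp add: coeff_eq_0)
qed

lemma coeff_tmult: "coeff (tmult p q) n = (\<Sum>i\<le>n. coeff p i * (\<sigma>^^i) (coeff q (n - i)))"
  unfolding tmult_def
  by (subst coeff_Abs_poly[where n="degree p + degree q"]) (auto simp: twisted_convolution_high)

lemma tmult_add_left: "tmult (p + q) r = tmult p r + tmult q r"
  by (rule poly_eqI) (simp add: coeff_tmult distrib_right sum.distrib)

lemma tmult_add_right: "tmult p (q + r) = tmult p q + tmult p r"
  by (rule poly_eqI) (simp add: coeff_tmult sigma_pow_add distrib_left sum.distrib)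

lemma tmult_0_left [simp]: "tmult 0 q = 0"
  by (rule poly_eqI) (simp add: coeff_tmult)

lemma tmult_0_right [simp]: "tmult p 0 = 0"
  by (rule poly_eqI) (simp add: coeff_tmult)

lemma tmult_diff_left: "tmult (p - q) r = tmult p r - tmult q r"
  by (rule poly_eqI) (simp add: coeff_tmult left_diff_distrib sum_subtractf)

lemma tmult_diff_right: "tmult p (q - r) = tmult p q - tmult p r"
  by (rule poly_eqI) (simp add: coeff_tmult sigma_pow_diff right_diff_distrib sum_subtractf)

lemma tmult_sum_left: "tmult (sum f A) r = (\<Sum>a\<in>A. tmult (f a) r)"
  by (induction A rule: infinite_finite_induct) (auto simp: tmult_add_left)

lemma tmult_sum_right: "tmult r (sum f A) = (\<Sum>a\<in>A. tmult r (f a))"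
  by (induction A rule: infinite_finite_induct) (auto simp: tmult_add_right)

lemma coeff_tmult_monom_left:
  "coeff (tmult (monom c j) g) n = (if j \<le> n then c * (\<sigma>^^j) (coeff g (n - j)) else 0)"
proof -
  have "coeff (tmult (monom c j) g) n = (\<Sum>i\<le>n. if i = j then c * (\<sigma>^^i) (coeff g (n - i)) else 0)"
    unfolding coeff_tmult by (rule sum.cong) (auto simp: coeff_monom)
  then show ?thesis by simp
qed

lemma coeff_tmult_const_left: "coeff (tmult (monom c 0) p) n = c * coeff p n"
  by (simp add: coeff_tmult_monom_left)

lemma tmult_monom_monom: "tmult (monom a i) (monom b j) = monom (a * (\<sigma>^^i) b) (i + j)"
  by (rule poly_eqI) (auto simp: coeff_tmult_monom_left coeff_monom)

abbreviation tone :: "'a poly" where "tone \<equiv> monom 1 0"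

lemma tmult_one_left [simp]: "tmult tone p = p"
  by (auto intro!: poly_eqI simp: coeff_tmult_monom_left)

lemma tmult_assoc: "tmult (tmult p q) r = tmult p (tmult q r)"
proof -
  have monoms: "tmult (tmult (monom a i) (monom b j)) (monom c k)
      = tmult (monom a i) (tmult (monom b j) (monom c k))" for a b c i j k
    by (simp add: tmult_monom_monom sigma_pow_mult funpow_add mult.assoc add_ac)
  let ?mon = "\<lambda>p i. monom (coeff p i) i"
  have "tmult (tmult p q) r = tmult (tmult (\<Sum>i\<le>degree p. ?mon p i) (\<Sum>j\<le>degree q. ?mon q j))
      (\<Sum>k\<le>degree r. ?mon r k)"
    by (simp only: poly_as_sum_of_monoms)
  also have "\<dots> = tmult (\<Sum>i\<le>degree p. ?mon p i)
      (tmult (\<Sum>j\<le>degree q. ?mon q j) (\<Sum>k\<le>degree r. ?mon r k))"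
    unfolding tmult_sum_left tmult_sum_right monoms ..
  finally show ?thesis by (simp only: poly_as_sum_of_monoms)
qed

end

lemma sum_eq_single:
  "finite A \<Longrightarrow> a \<in> A \<Longrightarrow> (\<And>i. i \<in> A \<Longrightarrow> i \<noteq> a \<Longrightarrow> f i = 0) \<Longrightarrow> sum f A = f a"
  by (simp add: sum.remove[of A a] sum.neutral)

lemma degree_0_monom: "degree s = 0 \<Longrightarrow> s = monom (coeff s 0) 0"
  by (metis degree_0_id monom_0)

context ring_automorphism
begin

lemma coeff_tmult_top:
  "coeff (tmult p q) (degree p + degree q) = lead_coeff p * (\<sigma>^^(degree p)) (lead_coeff q)"
proof -
  have "coeff (tmult p q) (degree p + degree q)
      = coeff p (degree p) * (\<sigma>^^(degree p)) (coeff q (degree p + degree q - degree p))"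
    unfolding coeff_tmult
  proof (rule sum_eq_single)
    fix i assume "i \<in> {..degree p + degree q}" "i \<noteq> degree p"
    then show "coeff p i * (\<sigma>^^i) (coeff q (degree p + degree q - i)) = 0"
      by (cases "degree p < i") (auto simp: coeff_eq_0)
  qed auto
  then show ?thesis by simp
qed

lemma degree_tmult:
  assumes "p \<noteq> 0" "q \<noteq> 0"
  shows "degree (tmult p q) = degree p + degree q"
proof (rule antisym)
  show "degree (tmult p q) \<le> degree p + degree q"
    by (rule degree_le) (auto simp: coeff_tmult twisted_convolution_high)
  show "degree p + degree q \<le> degree (tmult p q)"
    using assms by (intro le_degree) (simp add: coeff_tmult_top sigma_pow_nonzero)
qed

lemma tmult_eq_0_iff: "tmult p q = 0 \<longleftrightarrow> p = 0 \<or> q = 0"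
proof -
  have "coeff (tmult p q) (degree p + degree q) \<noteq> 0" if "p \<noteq> 0" "q \<noteq> 0"
    using that by (simp add: coeff_tmult_top sigma_pow_nonzero)
  then show ?thesis by (metis coeff_0 tmult_0_left tmult_0_right)
qed

lemma right_division:
  assumes g: "g \<noteq> 0"
  shows "\<exists>s e. p = tmult s g + e \<and> (e = 0 \<or> degree e < degree g)"
proof (induction "degree p" arbitrary: p rule: less_induct)
  case less
  show ?case
  proof (cases "p = 0 \<or> degree p < degree g")
    case True
    then show ?thesis by (metis add_0 tmult_0_left)
  next
    case False
    define n where "n = degree p"
    define k where "k = degree g"
    have kn: "k \<le> n" using False unfolding n_def k_def by auto
    define c where "c = lead_coeff p * inverse ((\<sigma>^^(n - k)) (lead_coeff g))"
    define p' where "p' = p - tmult (monom c (n - k)) g"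
    \<comment> \<open>subtracting \<open>c t\<^sup>n\<^sup>-\<^sup>k g\<close> kills the leading coefficient of \<open>p\<close>\<close>
    have top: "coeff p' n = 0"
      using kn g by (simp add: p'_def coeff_tmult_monom_left c_def k_def n_def mult.assoc sigma_pow_nonzero)
    have "degree p' \<le> n"
    proof (rule degree_le, intro allI impI)
      fix i assume i: "n < i"
      then have "coeff p i = 0" "coeff g (i - (n - k)) = 0"
        using kn by (auto simp: n_def k_def coeff_eq_0)
      then show "coeff p' i = 0" using i by (simp add: p'_def coeff_tmult_monom_left)
    qed
    then have p': "p' = 0 \<or> degree p' < degree p"
      using top n_def by (metis le_neq_implies_less leading_coeff_0_iff)
    show ?thesis
    proof (cases "p' = 0")
      case True
      then have "p = tmult (monom c (n - k)) g + 0" by (simp add: p'_def)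
      then show ?thesis by blast
    next
      case False
      then obtain s e where se: "p' = tmult s g + e" "e = 0 \<or> degree e < degree g"
        using less(1)[of p'] p' by blast
      have "p = tmult (s + monom c (n - k)) g + e"
        using se(1) by (simp add: p'_def tmult_add_left algebra_simps)
      then show ?thesis using se(2) by blast
    qed
  qed
qed

lemma degree_right_division:
  assumes "h = tmult s g + e" "e = 0 \<or> degree e < degree g" "g \<noteq> 0" "h \<noteq> 0"
    "degree g \<le> degree h"
  shows "s \<noteq> 0" "degree h = degree s + degree g"
proof -
  show s: "s \<noteq> 0"
    using assms by (metis add_0 leD tmult_0_left)
  show "degree h = degree s + degree g"
  proof (cases "e = 0")
    case False
    then have "degree e < degree (tmult s g)" using assms s by (simp add: degree_tmult)
    then show ?thesis using assms s by (simp add: degree_add_eq_left degree_tmult)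
  qed (use assms s in \<open>simp add: degree_tmult\<close>)
qed

definition tunit :: "'a poly \<Rightarrow> bool" where
  "tunit g \<longleftrightarrow> g \<noteq> 0 \<and> degree g = 0"

lemma tunit_inverse:
  assumes "tunit g"
  shows "tmult (monom (inverse (coeff g 0)) 0) g = tone"
    and "tmult g (monom (inverse (coeff g 0)) 0) = tone"
proof -
  have "g = monom (coeff g 0) 0" "coeff g 0 \<noteq> 0"
    using assms degree_0_monom unfolding tunit_def by (metis monom_eq_0_iff)+
  then show "tmult (monom (inverse (coeff g 0)) 0) g = tone"
    and "tmult g (monom (inverse (coeff g 0)) 0) = tone"
    by (metis tmult_monom_monom funpow_0 id_apply add_0 left_inverse right_inverse)+
qed

lemma tunit_if_left_inverse:
  assumes "tmult g' g = tone"
  shows "tunit g"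
proof -
  have "g \<noteq> 0" "g' \<noteq> 0" using assms by auto
  then have "degree g' + degree g = 0"
    using assms by (metis degree_tmult degree_monom_eq zero_neq_one)
  then show ?thesis using \<open>g \<noteq> 0\<close> by (simp add: tunit_def)
qed

definition tirreducible :: "'a poly \<Rightarrow> bool" where
  "tirreducible f \<longleftrightarrow> f \<noteq> 0 \<and> \<not> tunit f \<and> (\<forall>g h. f = tmult g h \<longrightarrow> tunit g \<or> tunit h)"

definition right_dvd :: "'a poly \<Rightarrow> 'a poly \<Rightarrow> bool" where
  "right_dvd h p \<longleftrightarrow> (\<exists>a. p = tmult a h)"

lemma right_dvd_refl: "right_dvd h h"
  unfolding right_dvd_def by (metis tmult_one_left)

lemma right_dvd_trans: "right_dvd a b \<Longrightarrow> right_dvd b c \<Longrightarrow> right_dvd a c"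
  unfolding right_dvd_def by (metis tmult_assoc)

lemma right_dvd_tmult_left: "right_dvd h x \<Longrightarrow> right_dvd h (tmult c x)"
  unfolding right_dvd_def by (metis tmult_assoc)

lemma right_dvd_diff: "right_dvd h x \<Longrightarrow> right_dvd h y \<Longrightarrow> right_dvd h (x - y)"
  unfolding right_dvd_def by (metis tmult_diff_left)

lemma right_dvd_degree:
  assumes "right_dvd h p" "p \<noteq> 0"
  shows "degree h \<le> degree p"
  using assms unfolding right_dvd_def by (metis degree_tmult le_add2 tmult_0_left tmult_0_right)

definition left_ideal :: "'a poly set \<Rightarrow> bool" where
  "left_ideal M \<longleftrightarrow> (\<forall>x\<in>M. \<forall>y\<in>M. x - y \<in> M) \<and> (\<forall>c x. x \<in> M \<longrightarrow> tmult c x \<in> M)"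

lemma left_ideal_principal:
  assumes "left_ideal M" "p0 \<in> M" "p0 \<noteq> 0"
  obtains L where "L \<in> M" "L \<noteq> 0" "degree L \<le> degree p0" "\<And>p. p \<in> M \<Longrightarrow> right_dvd L p"
proof -
  define n where "n = (LEAST n. \<exists>p\<in>M. p \<noteq> 0 \<and> degree p = n)"
  obtain L where L: "L \<in> M" "L \<noteq> 0" "degree L = n"
    using LeastI_ex[of "\<lambda>n. \<exists>p\<in>M. p \<noteq> 0 \<and> degree p = n"] assms unfolding n_def by blast
  have min: "degree L \<le> degree p" if "p \<in> M" "p \<noteq> 0" for p
    using L(3) that unfolding n_def by (metis (mono_tags, lifting) Least_le)
  have "right_dvd L p" if p: "p \<in> M" for p
  proof -
    obtain s e where se: "p = tmult s L + e" "e = 0 \<or> degree e < degree L"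
      using right_division[OF L(2)] by blast
    have "e = p - tmult s L" using se by simp
    then have "e \<in> M" using assms(1) p L(1) unfolding left_ideal_def by auto
    then have "e = 0" using se(2) min by force
    then show ?thesis using se unfolding right_dvd_def by auto
  qed
  then show ?thesis using that L min assms by blast
qed

lemma left_ideal_combinations: "left_ideal {tmult u x + tmult v y | u v. True}"
  unfolding left_ideal_def
proof (intro conjI ballI allI impI)
  fix a b assume "a \<in> {tmult u x + tmult v y |u v. True}" "b \<in> {tmult u x + tmult v y |u v. True}"
  then obtain u v u' v' where "a = tmult u x + tmult v y" "b = tmult u' x + tmult v' y" by blast
  then have "a - b = tmult (u - u') x + tmult (v - v') y" by (simp add: tmult_diff_left algebra_simps)
  then show "a - b \<in> {tmult u x + tmult v y |u v. True}" by blast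
next
  fix c a assume "a \<in> {tmult u x + tmult v y |u v. True}"
  then obtain u v where "a = tmult u x + tmult v y" by blast
  then have "tmult c a = tmult (tmult c u) x + tmult (tmult c v) y"
    by (simp add: tmult_add_right tmult_assoc)
  then show "tmult c a \<in> {tmult u x + tmult v y |u v. True}" by blast
qed

lemma right_dvd_or_bezout:
  assumes h: "h \<noteq> 0" and L: "L \<noteq> 0"
    and min: "\<And>r. right_dvd r h \<Longrightarrow> r \<noteq> 0 \<Longrightarrow> degree r = 0 \<or> degree h \<le> degree r"
  shows "right_dvd h L \<or> (\<exists>u v. tmult u L + tmult v h = tone)"
proof -
  define N where "N = {tmult u L + tmult v h | u v. True}"
  have N: "left_ideal N" unfolding N_def by (rule left_ideal_combinations)
  have "h = tmult 0 L + tmult tone h" "L = tmult tone L + tmult 0 h" by simp_all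
  then have hN: "h \<in> N" and LN: "L \<in> N" unfolding N_def by blast+
  obtain r where r: "r \<in> N" "r \<noteq> 0" "\<And>p. p \<in> N \<Longrightarrow> right_dvd r p"
    using left_ideal_principal[OF N hN h] by blast
  show ?thesis
  proof (cases "degree r = 0")
    case True
    then have "tone \<in> N" using tunit_inverse(1)[of r] N r(1,2) unfolding left_ideal_def tunit_def by metis
    then obtain u v where "tone = tmult u L + tmult v h" unfolding N_def by blast
    then show ?thesis by metis
  next
    case False
    obtain s where s: "h = tmult s r" using r(3)[OF hN] unfolding right_dvd_def by blast
    then have "s \<noteq> 0" "degree h \<le> degree r" using h min[OF r(3)[OF hN] r(2)] False by auto
    then have "tunit s" using s r(2) by (simp add: degree_tmult tunit_def)
    then have "r = tmult (monom (inverse (coeff s 0)) 0) h"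
      unfolding s by (simp add: tmult_assoc[symmetric] tunit_inverse)
    then have "right_dvd h r" unfolding right_dvd_def by blast
    then show ?thesis using r(3)[OF LN] right_dvd_trans by blast
  qed
qed

lemma tirreducible_bezout:
  assumes "tirreducible f" "x \<noteq> 0" "degree x < degree f"
  shows "\<exists>u v. tmult u x + tmult v f = tone"
proof -
  have "\<not> right_dvd f x" using assms right_dvd_degree by fastforce
  moreover have "degree r = 0 \<or> degree f \<le> degree r" if r: "right_dvd r f" "r \<noteq> 0" for r
  proof -
    obtain s where s: "f = tmult s r" using r unfolding right_dvd_def by blast
    then have "s \<noteq> 0" using assms(1) unfolding tirreducible_def by auto
    then have "tunit s \<or> tunit r" using assms(1) s unfolding tirreducible_def by blast
    then show ?thesis using s \<open>s \<noteq> 0\<close> r(2) by (auto simp: tunit_def degree_tmult)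
  qed
  ultimately show ?thesis
    using right_dvd_or_bezout[of f x] assms unfolding tirreducible_def by blast
qed

end

context ring_automorphism
begin

text \<open>
  Coprime polynomials admit no common left multiple of small degree; this is the
  Euclidean-algorithm argument, run by induction on \<open>degree g + degree h\<close>.
\<close>

lemma bezout_common_multiple_degree_aux:
  "degree g \<le> degree h \<Longrightarrow> g \<noteq> 0 \<Longrightarrow> h \<noteq> 0 \<Longrightarrow> tmult u g + tmult v h = tone
   \<Longrightarrow> tmult a g = tmult b h
   \<Longrightarrow> (a = 0 \<and> b = 0) \<or> (degree h \<le> degree a \<and> degree g \<le> degree b)"
proof (induction "degree g + degree h" arbitrary: g h u v a b rule: less_induct)
  case less
  obtain s e where se: "h = tmult s g + e" "e = 0 \<or> degree e < degree g"
    using right_division[OF less.prems(2)] by blast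
  note sd = degree_right_division[OF se less.prems(2) less.prems(3) less.prems(1)]
  have bez: "tmult v e + tmult (u + tmult v s) g = tone"
    using less.prems(4) unfolding se(1) by (simp add: tmult_add_right tmult_add_left tmult_assoc algebra_simps)
  have rel: "tmult b e = tmult (a - tmult b s) g"
    using less.prems(5) unfolding se(1) by (simp add: tmult_add_right tmult_diff_left tmult_assoc algebra_simps)
  show ?case
  proof (cases "b = 0")
    case True
    then show ?thesis using less.prems(2,5) by (simp add: tmult_eq_0_iff)
  next
    case bnz: False
    show ?thesis
    proof (cases "e = 0")
      case True
      then have "tunit g" using bez tunit_if_left_inverse by simp
      then have g0: "degree g = 0" by (simp add: tunit_def)
      have "tmult (a - tmult b s) g = 0" using rel True by simp
      then have "a = tmult b s" using less.prems(2) by (simp add: tmult_eq_0_iff)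
      then show ?thesis using bnz sd g0 by (simp add: degree_tmult)
    next
      case enz: False
      have lt: "degree e < degree g" using se(2) enz by simp
      have "degree g \<le> degree b"
        using less.hyps[of e g v "u + tmult v s" b "a - tmult b s"] lt less.prems(1,2) enz bez rel bnz
        by auto
      define w where "w = a - tmult b s"
      have dbs: "degree (tmult b s) = degree b + degree s" using bnz sd by (simp add: degree_tmult)
      have "degree a = degree b + degree s"
      proof (cases "w = 0")
        case True then show ?thesis using dbs by (simp add: w_def)
      next
        case False
        have "degree w + degree g = degree b + degree e"
          using rel False bnz enz less.prems(2) by (metis w_def degree_tmult)
        then have "degree w < degree (tmult b s)" using lt dbs by linarith
        moreover have "a = tmult b s + w" by (simp add: w_def)
        ultimately show ?thesis using dbs by (simp add: degree_add_eq_left)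
      qed
      then show ?thesis using \<open>degree g \<le> degree b\<close> sd by simp
    qed
  qed
qed

lemma bezout_common_multiple_degree:
  assumes "g \<noteq> 0" "h \<noteq> 0" "tmult u g + tmult v h = tone" "tmult a g = tmult b h"
  shows "(a = 0 \<and> b = 0) \<or> (degree h \<le> degree a \<and> degree g \<le> degree b)"
proof (cases "degree g \<le> degree h")
  case True
  then show ?thesis using bezout_common_multiple_degree_aux assms by blast
next
  case False
  then show ?thesis
    using bezout_common_multiple_degree_aux[of h g v u b a] assms by (auto simp: add.commute)
qed

lemma tirreducible_no_zero_divisor:
  assumes "tirreducible f" "x \<noteq> 0" "degree x < degree f" "a \<noteq> 0" "degree a < degree f"
  shows "tmult a x \<noteq> tmult q f"
proof
  assume eq: "tmult a x = tmult q f"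
  obtain u v where "tmult u x + tmult v f = tone" using tirreducible_bezout assms by blast
  then show False
    using bezout_common_multiple_degree[OF assms(2) _ _ eq] assms unfolding tirreducible_def by auto
qed

lemma common_left_multiple_aux:
  "degree g \<le> degree h \<Longrightarrow> g \<noteq> 0 \<Longrightarrow> h \<noteq> 0
   \<Longrightarrow> \<exists>a b. a \<noteq> 0 \<and> b \<noteq> 0 \<and> tmult a g = tmult b h \<and> degree a \<le> degree h \<and> degree b \<le> degree g"
proof (induction "degree g + degree h" arbitrary: g h rule: less_induct)
  case less
  obtain s e where se: "h = tmult s g + e" "e = 0 \<or> degree e < degree g"
    using right_division[OF less.prems(2)] by blast
  note sd = degree_right_division[OF se less.prems(2) less.prems(3) less.prems(1)]
  show ?case
  proof (cases "e = 0")
    case True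
    then have "s \<noteq> 0 \<and> tone \<noteq> 0 \<and> tmult s g = tmult tone h \<and> degree s \<le> degree h
        \<and> degree tone \<le> degree g"
      using se sd by (simp add: degree_monom_eq)
    then show ?thesis by blast
  next
    case enz: False
    have lt: "degree e < degree g" using se(2) enz by simp
    obtain a' b' where ab: "a' \<noteq> 0" "b' \<noteq> 0" "tmult a' e = tmult b' g" "degree a' \<le> degree g"
      "degree b' \<le> degree e"
      using less.hyps[of e g] lt less.prems enz by auto
    have eq: "tmult (tmult a' s + b') g = tmult a' h"
      unfolding se(1) by (simp add: tmult_add_right tmult_add_left tmult_assoc ab(3))
    have nz: "tmult a' s + b' \<noteq> 0"
      using eq ab(1) less.prems(3) by (auto simp: tmult_eq_0_iff)
    have "degree (tmult a' s) \<le> degree h" using ab(1,4) sd by (simp add: degree_tmult)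
    moreover have "degree b' \<le> degree h" using ab(5) lt less.prems(1) by linarith
    ultimately have "degree (tmult a' s + b') \<le> degree h" by (simp add: degree_add_le)
    then show ?thesis using nz ab eq lt by (intro exI[of _ "tmult a' s + b'"] exI[of _ a']) auto
  qed
qed

lemma common_left_multiple:
  assumes "g \<noteq> 0" "h \<noteq> 0"
  shows "\<exists>a b. a \<noteq> 0 \<and> b \<noteq> 0 \<and> tmult a g = tmult b h \<and> degree a \<le> degree h \<and> degree b \<le> degree g"
proof (cases "degree g \<le> degree h")
  case True
  then show ?thesis using common_left_multiple_aux assms by blast
next
  case False
  then obtain a b where "a \<noteq> 0 \<and> b \<noteq> 0 \<and> tmult a h = tmult b g \<and> degree a \<le> degree g \<and> degree b \<le> degree h"
    using common_left_multiple_aux[of h g] assms by auto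
  then show ?thesis by metis
qed

lemma common_multiple_generator_step:
  assumes L: "L \<noteq> 0" "L \<in> M" "\<forall>p\<in>M. right_dvd L p"
    and h: "h \<noteq> 0"
    and min: "\<And>r. right_dvd r h \<Longrightarrow> r \<noteq> 0 \<Longrightarrow> degree r = 0 \<or> degree h \<le> degree r"
    and M: "left_ideal M"
  shows "\<exists>L'. L' \<in> M \<and> right_dvd h L' \<and> L' \<noteq> 0 \<and> (\<forall>p. p \<in> M \<and> right_dvd h p \<longrightarrow> right_dvd L' p)
     \<and> (degree L' = degree L \<or> degree L' = degree L + degree h)"
proof (cases "right_dvd h L")
  case True
  then show ?thesis using L by blast
next
  case False
  then obtain u v where uv: "tmult u L + tmult v h = tone" using right_dvd_or_bezout[OF h L(1) min] by blast
  obtain a b where ab: "a \<noteq> 0" "b \<noteq> 0" "tmult a L = tmult b h" "degree a \<le> degree h"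
    using common_left_multiple[OF L(1) h] by blast
  have "degree h \<le> degree a" using bezout_common_multiple_degree[OF L(1) h uv ab(3)] ab(1) by blast
  define N where "N = tmult a L"
  have NM: "N \<in> M" using M L(2) unfolding left_ideal_def N_def by blast
  have Nh: "right_dvd h N" unfolding N_def ab(3) right_dvd_def by blast
  have Nnz: "N \<noteq> 0" unfolding N_def using ab(1) L(1) by (simp add: tmult_eq_0_iff)
  have dN: "degree N = degree L + degree h"
    unfolding N_def using ab(1,4) L(1) \<open>degree h \<le> degree a\<close> by (simp add: degree_tmult)
  have gen: "right_dvd N p" if p: "p \<in> M" "right_dvd h p" for p
  proof -
    obtain s e where se: "p = tmult s N + e" "e = 0 \<or> degree e < degree N"
      using right_division[OF Nnz] by blast
    have ee: "e = p - tmult s N" using se(1) by simp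
    have "e \<in> M" unfolding ee using M p(1) NM unfolding left_ideal_def by blast
    then obtain c' where c': "e = tmult c' L" using L(3) unfolding right_dvd_def by blast
    have "right_dvd h e" unfolding ee by (intro right_dvd_diff p(2) right_dvd_tmult_left Nh)
    then obtain e' where e': "e = tmult e' h" unfolding right_dvd_def by blast
    have "e = 0"
    proof (rule ccontr)
      assume enz: "e \<noteq> 0"
      then have "c' \<noteq> 0" using c' by auto
      then have "degree h \<le> degree c'"
        using bezout_common_multiple_degree[OF L(1) h uv, of c' e'] c' e' by auto
      then have "degree N \<le> degree e" using c' \<open>c' \<noteq> 0\<close> L(1) dN by (simp add: degree_tmult)
      then show False using se(2) enz by simp
    qed
    then show ?thesis using se(1) unfolding right_dvd_def by auto
  qed
  show ?thesis using NM Nh Nnz gen dN by blast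
qed

end

section \<open>Linear algebra over a division subring\<close>

definition subdivring :: "'a::division_ring set \<Rightarrow> bool" where
  "subdivring K \<longleftrightarrow> 0 \<in> K \<and> 1 \<in> K \<and> (\<forall>x\<in>K. \<forall>y\<in>K. x + y \<in> K \<and> x - y \<in> K \<and> x * y \<in> K)
     \<and> (\<forall>x\<in>K. inverse x \<in> K)"

lemma subdivring_0: "subdivring K \<Longrightarrow> 0 \<in> K"
  and subdivring_1: "subdivring K \<Longrightarrow> 1 \<in> K"
  and subdivring_diff: "subdivring K \<Longrightarrow> x \<in> K \<Longrightarrow> y \<in> K \<Longrightarrow> x - y \<in> K"
  and subdivring_mult: "subdivring K \<Longrightarrow> x \<in> K \<Longrightarrow> y \<in> K \<Longrightarrow> x * y \<in> K"
  and subdivring_inverse: "subdivring K \<Longrightarrow> x \<in> K \<Longrightarrow> inverse x \<in> K"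
  unfolding subdivring_def by blast+

lemma subdivring_uminus: "subdivring K \<Longrightarrow> x \<in> K \<Longrightarrow> - x \<in> K"
  by (metis diff_0 subdivring_0 subdivring_diff)

lemma subdivring_sum: "subdivring K \<Longrightarrow> (\<And>a. a \<in> A \<Longrightarrow> f a \<in> K) \<Longrightarrow> sum f A \<in> K"
  by (induction A rule: infinite_finite_induct) (auto simp: subdivring_def)

lemma subdivring_center: "subdivring (center :: 'a::division_ring set)"
proof -
  have add: "(x + y) * z = z * (x + y)" and diff: "(x - y) * z = z * (x - y)"
    if "x * z = z * x" "y * z = z * y" for x y z :: 'a
    using that by (simp_all only: distrib_left distrib_right left_diff_distrib right_diff_distrib)
  have mult: "x * y * z = z * (x * y)" if "x * z = z * x" "y * z = z * y" for x y z :: 'a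
  proof -
    have "x * y * z = x * z * y" using that(2) by (simp only: mult.assoc)
    also have "\<dots> = z * (x * y)" using that(1) by (simp only: mult.assoc)
    finally show ?thesis .
  qed
  have inverse: "inverse x * y = y * inverse x" if "x * y = y * x" for x y :: 'a
  proof (cases "x = 0")
    case False
    have "inverse x * y = inverse x * (y * x) * inverse x" using False by (simp add: mult.assoc)
    also have "\<dots> = inverse x * (x * y) * inverse x" by (simp only: that)
    also have "\<dots> = y * inverse x" using False by (simp add: mult.assoc[symmetric])
    finally show ?thesis .
  qed simp
  have "0 * y = y * 0" "1 * y = y * 1" for y :: 'a by simp_all
  then show ?thesis
    unfolding subdivring_def center_def by (blast intro: add diff mult inverse)
qed

lemma homogeneous_system_nontrivial_solution:
  assumes "subdivring K" "finite I" "finite J" "card I < card J" "\<forall>j\<in>J. \<forall>i\<in>I. v j i \<in> K"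
  shows "\<exists>c. (\<forall>j\<in>J. c j \<in> K) \<and> (\<exists>j\<in>J. c j \<noteq> 0) \<and> (\<forall>i\<in>I. (\<Sum>j\<in>J. c j * v j i) = 0)"
  using assms(2-5)
proof (induction I arbitrary: J v rule: finite_induct)
  case empty
  then obtain j0 where "j0 \<in> J" by fastforce
  then show ?case using assms(1) unfolding subdivring_def
    by (rule_tac x="\<lambda>j. if j = j0 then 1 else 0" in exI) auto
next
  case (insert i0 I)
  show ?case
  proof (cases "\<forall>j\<in>J. v j i0 = 0")
    case True
    then show ?thesis using insert.IH[of J v] insert.prems insert.hyps by auto
  next
    case False
    then obtain j0 where j0: "j0 \<in> J" "v j0 i0 \<noteq> 0" by blast
    \<comment> \<open>eliminate the unknown \<open>j0\<close> using the equation \<open>i0\<close>\<close>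
    define J' where "J' = J - {j0}"
    define iv where "iv = inverse (v j0 i0)"
    define w where "w = (\<lambda>j i. v j i - v j i0 * iv * v j0 i)"
    have ivK: "iv \<in> K" using insert.prems j0 assms(1) unfolding iv_def subdivring_def by auto
    have "card J' = card J - 1" using j0 insert.prems unfolding J'_def by simp
    then have cJ': "card I < card J'" using insert by simp
    have wK: "\<forall>j\<in>J'. \<forall>i\<in>I. w j i \<in> K"
      using insert.prems j0 ivK assms(1) unfolding w_def J'_def subdivring_def by auto
    obtain c' where c': "\<forall>j\<in>J'. c' j \<in> K" "\<exists>j\<in>J'. c' j \<noteq> 0" "\<forall>i\<in>I. (\<Sum>j\<in>J'. c' j * w j i) = 0"
      using insert.IH[OF _ cJ' wK] insert.prems(1) unfolding J'_def by auto
    define c0 where "c0 = - (\<Sum>j\<in>J'. c' j * v j i0 * iv)"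
    define c where "c = (\<lambda>j. if j = j0 then c0 else c' j)"
    have ident: "(\<Sum>j\<in>J. c j * v j i) = (\<Sum>j\<in>J'. c' j * w j i)" for i
    proof -
      have "(\<Sum>j\<in>J. c j * v j i) = c j0 * v j0 i + (\<Sum>j\<in>J'. c j * v j i)"
        using j0 insert.prems(1) unfolding J'_def by (simp add: sum.remove)
      also have "(\<Sum>j\<in>J'. c j * v j i) = (\<Sum>j\<in>J'. c' j * v j i)"
        unfolding c_def J'_def by (rule sum.cong) auto
      also have "c j0 * v j0 i = - (\<Sum>j\<in>J'. c' j * v j i0 * iv * v j0 i)"
        unfolding c_def c0_def by (simp add: sum_distrib_right)
      finally show ?thesis
        unfolding w_def by (simp add: right_diff_distrib sum_subtractf mult.assoc)
    qed
    have c0K: "c0 \<in> K" unfolding c0_def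
      using c'(1) insert.prems ivK assms(1) unfolding J'_def
      by (intro subdivring_uminus[OF assms(1)] subdivring_sum[OF assms(1)]) (auto simp: subdivring_def)
    have "w j i0 = 0" for j using j0(2) unfolding w_def iv_def by (simp add: mult.assoc)
    then have "\<forall>i\<in>insert i0 I. (\<Sum>j\<in>J. c j * v j i) = 0" using ident c'(3) by auto
    moreover have "\<forall>j\<in>J. c j \<in> K" "\<exists>j\<in>J. c j \<noteq> 0"
      using c0K c'(1,2) unfolding c_def J'_def by auto
    ultimately show ?thesis by blast
  qed
qed

definition lscale :: "'a::division_ring \<Rightarrow> 'a poly \<Rightarrow> 'a poly" where
  "lscale k p = Abs_poly (\<lambda>n. k * coeff p n)"

lemma coeff_lscale [simp]: "coeff (lscale k p) n = k * coeff p n"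
  unfolding lscale_def by (subst coeff_Abs_poly[where n="degree p"]) (simp_all add: coeff_eq_0)

lemma lscale_add: "lscale k (p + q) = lscale k p + lscale k q"
  by (rule poly_eqI) (simp add: distrib_left)

lemma lscale_lscale: "lscale a (lscale b p) = lscale (a * b) p"
  by (rule poly_eqI) (simp add: mult.assoc)

lemma lscale_1 [simp]: "lscale 1 p = p"
  and lscale_0 [simp]: "lscale 0 p = 0" "lscale k 0 = 0"
  by (rule poly_eqI, simp)+

lemma degree_lscale_le: "degree (lscale k p) \<le> degree p"
  by (rule degree_le) (simp add: coeff_eq_0)

lemma lscale_dependent:
  assumes "subdivring K" "finite I" "finite J" "card I < card J"
    "\<forall>j\<in>J. y j = (\<Sum>i\<in>I. lscale (e j i) (s i))" "\<forall>j\<in>J. \<forall>i\<in>I. e j i \<in> K"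
  shows "\<exists>c. (\<forall>j\<in>J. c j \<in> K) \<and> (\<exists>j\<in>J. c j \<noteq> 0) \<and> (\<Sum>j\<in>J. lscale (c j) (y j)) = 0"
proof -
  obtain c where c: "\<forall>j\<in>J. c j \<in> K" "\<exists>j\<in>J. c j \<noteq> 0" "\<forall>i\<in>I. (\<Sum>j\<in>J. c j * e j i) = 0"
    using homogeneous_system_nontrivial_solution[OF assms(1-4), of e] assms(6) by blast
  have "coeff (\<Sum>j\<in>J. lscale (c j) (y j)) n = 0" for n
  proof -
    have "coeff (\<Sum>j\<in>J. lscale (c j) (y j)) n = (\<Sum>j\<in>J. \<Sum>i\<in>I. c j * e j i * coeff (s i) n)"
      using assms(5) by (simp add: coeff_sum sum_distrib_left mult.assoc)
    also have "\<dots> = (\<Sum>i\<in>I. (\<Sum>j\<in>J. c j * e j i) * coeff (s i) n)"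
      by (subst sum.swap) (simp add: sum_distrib_right)
    finally show ?thesis using c(3) by simp
  qed
  then show ?thesis using c(1,2) by (metis coeff_0 poly_eqI)
qed

text \<open>
  Rather than developing dimension theory we use that \<open>y, T y, \<dots>, T\<^sup>N y\<close> are dependent once \<open>N\<close>
  exceeds the number of spanning vectors, and peel off a relation by injectivity until
  its constant term is nonzero, which exhibits a preimage of \<open>y\<close>.
\<close>

lemma injective_linear_map_surj:
  assumes K: "subdivring K" and I: "finite I"
    and span: "\<forall>x\<in>V. \<exists>e. (\<forall>i\<in>I. e i \<in> K) \<and> x = (\<Sum>i\<in>I. lscale (e i) (s i))"
    and V_add: "\<forall>x\<in>V. \<forall>y\<in>V. x + y \<in> V" and V_lscale: "\<forall>k\<in>K. \<forall>x\<in>V. lscale k x \<in> V"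
    and V_0: "0 \<in> V"
    and T_V: "\<forall>x\<in>V. T x \<in> V" and T_add: "\<forall>x\<in>V. \<forall>y\<in>V. T (x + y) = T x + T y"
    and T_lscale: "\<forall>k\<in>K. \<forall>x\<in>V. T (lscale k x) = lscale k (T x)"
    and T_inj: "\<forall>x\<in>V. T x = 0 \<longrightarrow> x = 0"
    and y: "y \<in> V"
  shows "\<exists>x\<in>V. T x = y"
proof -
  have T_0: "T 0 = 0" using T_add V_0 by (metis add_cancel_right_right add_0)
  have V_sum: "finite A \<Longrightarrow> (\<And>a. a \<in> A \<Longrightarrow> f a \<in> V) \<Longrightarrow> sum f A \<in> V" for A and f :: "'c \<Rightarrow> _"
    by (induction A rule: finite_induct) (auto simp: V_0 V_add)
  have T_sum: "finite A \<Longrightarrow> (\<And>a. a \<in> A \<Longrightarrow> f a \<in> V) \<Longrightarrow> T (sum f A) = (\<Sum>a\<in>A. T (f a))"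
    for A and f :: "'c \<Rightarrow> _"
    by (induction A rule: finite_induct) (auto simp: T_0 T_add V_sum)
  have TkV: "(T^^k) y \<in> V" for k by (induction k) (auto simp: y T_V)
  have relation: "\<exists>x\<in>V. T x = y"
    if "\<exists>k\<le>N. c k \<noteq> 0" "\<forall>k\<le>N. c k \<in> K" "(\<Sum>k\<le>N. lscale (c k) ((T^^k) y)) = 0" for N c
    using that
  proof (induction N arbitrary: c)
    case 0
    then have "lscale (c 0) y = 0" "c 0 \<noteq> 0" by auto
    then have "y = 0" by (metis lscale_lscale lscale_1 lscale_0(2) left_inverse)
    then show ?case using V_0 T_0 by blast
  next
    case (Suc N)
    define Z where "Z = (\<Sum>k\<le>N. lscale (c (Suc k)) ((T^^k) y))"
    have ZV: "Z \<in> V"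
      unfolding Z_def using Suc.prems(2) by (intro V_sum) (auto intro: TkV V_lscale[rule_format])
    have TZ: "T Z = (\<Sum>k\<le>N. lscale (c (Suc k)) ((T^^(Suc k)) y))"
      unfolding Z_def using Suc.prems(2)
      by (subst T_sum) (auto intro!: sum.cong TkV V_lscale[rule_format] simp: T_lscale TkV)
    have "(\<Sum>k\<le>Suc N. lscale (c k) ((T^^k) y))
        = lscale (c 0) y + (\<Sum>k\<le>N. lscale (c (Suc k)) ((T^^(Suc k)) y))"
      by (subst sum.atMost_Suc_shift) simp
    then have eq: "lscale (c 0) y + T Z = 0" using Suc.prems(3) unfolding TZ by simp
    show ?case
    proof (cases "c 0 = 0")
      case False
      define k where "k = - inverse (c 0)"
      have kK: "k \<in> K"
        using K Suc.prems(2) unfolding k_def by (auto intro: subdivring_uminus subdivring_inverse)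
      have "T (lscale k Z) = lscale k (T Z)" using T_lscale kK ZV by simp
      also have "T Z = - lscale (c 0) y" using eq by (simp add: eq_neg_iff_add_eq_0 add.commute)
      also have "lscale k (- lscale (c 0) y) = y" using False unfolding k_def
        by (intro poly_eqI) (simp add: mult.assoc[symmetric])
      finally show ?thesis using V_lscale kK ZV by blast
    next
      case True
      then have "Z = 0" using eq T_inj ZV by simp
      then show ?thesis using Suc.IH[of "\<lambda>k. c (Suc k)"] Suc.prems True unfolding Z_def
        by (metis Suc_le_mono not0_implies_Suc)
    qed
  qed
  have "\<forall>k\<in>{..card I}. \<exists>e. (\<forall>i\<in>I. e i \<in> K) \<and> (T^^k) y = (\<Sum>i\<in>I. lscale (e i) (s i))"
    using span TkV by blast
  then obtain e where "\<forall>k\<in>{..card I}. (\<forall>i\<in>I. e k i \<in> K) \<and> (T^^k) y = (\<Sum>i\<in>I. lscale (e k i) (s i))"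
    by metis
  then obtain c where "\<forall>k\<in>{..card I}. c k \<in> K" "\<exists>k\<in>{..card I}. c k \<noteq> 0"
      "(\<Sum>k\<in>{..card I}. lscale (c k) ((T^^k) y)) = 0"
    using lscale_dependent[OF K I, of "{..card I}" "\<lambda>k. (T^^k) y" e s] by auto
  then show ?thesis using relation[of "card I" c] by auto
qed

section \<open>The fixed field \<open>F\<^sub>0\<close>\<close>

context ring_automorphism
begin

lemma sigma_inverse: "\<sigma> (inverse x) = inverse (\<sigma> x)"
proof (cases "x = 0")
  case False
  then have "\<sigma> x * \<sigma> (inverse x) = 1" by (simp add: sigma_mult[symmetric] sigma_one)
  then show ?thesis by (rule inverse_unique[symmetric])
qed (simp add: sigma_zero)

lemma sigma_center:
  assumes "x \<in> center"
  shows "\<sigma> x \<in> center"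
  unfolding center_def
proof (intro CollectI allI)
  fix y
  obtain z where z: "y = \<sigma> z" using sigma_bij unfolding bij_def surj_def by blast
  have "x * z = z * x" using assms unfolding center_def by blast
  then show "\<sigma> x * y = y * \<sigma> x" unfolding z by (simp only: sigma_mult[symmetric])
qed

lemma sigma_pow_center: "x \<in> center \<Longrightarrow> (\<sigma>^^i) x \<in> center"
  by (induction i) (auto simp: sigma_center)

lemma subdivring_fixed_center: "subdivring (fixed_center \<sigma>)"
  using subdivring_center unfolding subdivring_def fixed_center_def
  by (auto simp: sigma_add sigma_one sigma_zero sigma_mult sigma_inverse sigma_pow_diff[of 1, simplified])

lemma sigma_pow_fixed: "x \<in> fixed_center \<sigma> \<Longrightarrow> (\<sigma>^^i) x = x"
  unfolding fixed_center_def by (induction i) auto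

text \<open>
  Applying \<open>\<sigma>\<close> to the \<open>i\<close>-th equation of the system gives the \<open>(i+1)\<close>-th one with
  coefficients \<open>\<sigma> \<circ> c\<close>; the last equation wraps around since \<open>\<sigma>\<^sup>m\<close> is the identity on the center.
\<close>

lemma sigma_shift_relation:
  assumes ord: "order_on_center \<sigma> m" and S: "S \<subseteq> center"
    and c: "\<forall>i<m. (\<Sum>\<alpha>\<in>S. c \<alpha> * (\<sigma>^^i) \<alpha>) = 0" and i: "i < m"
  shows "(\<Sum>\<alpha>\<in>S. \<sigma> (c \<alpha>) * (\<sigma>^^i) \<alpha>) = 0"
proof -
  obtain j where j: "j < m" "\<forall>\<alpha>\<in>S. (\<sigma>^^i) \<alpha> = \<sigma> ((\<sigma>^^j) \<alpha>)"
  proof (cases i)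
    case 0
    have "(\<sigma>^^m) \<alpha> = \<alpha>" if "\<alpha> \<in> S" for \<alpha>
      using ord S that unfolding order_on_center_def by blast
    moreover have "(\<sigma>^^m) \<alpha> = \<sigma> ((\<sigma>^^(m - 1)) \<alpha>)" for \<alpha>
      using i by (cases m) auto
    ultimately show ?thesis using that[of "m - 1"] i 0 by simp
  next
    case (Suc j)
    then show ?thesis using that[of j] i by simp
  qed
  have "(\<Sum>\<alpha>\<in>S. \<sigma> (c \<alpha>) * (\<sigma>^^i) \<alpha>) = \<sigma> (\<Sum>\<alpha>\<in>S. c \<alpha> * (\<sigma>^^j) \<alpha>)"
    using j(2) by (simp add: sigma_sum sigma_mult)
  then show ?thesis using c j(1) by (simp add: sigma_zero)
qed

lemma artin_dependence:
  assumes ord: "order_on_center \<sigma> m" and S: "S \<subseteq> center" "finite S" "m < card S"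
  shows "\<exists>e. (\<forall>\<gamma>\<in>S. e \<gamma> \<in> fixed_center \<sigma>) \<and> (\<exists>\<gamma>\<in>S. e \<gamma> \<noteq> 0) \<and> (\<Sum>\<gamma>\<in>S. e \<gamma> * \<gamma>) = 0"
proof -
  have m0: "0 < m" using ord unfolding order_on_center_def by simp
  define Sol where "Sol = {c. (\<forall>\<alpha>\<in>S. c \<alpha> \<in> center) \<and> (\<exists>\<alpha>\<in>S. c \<alpha> \<noteq> 0)
      \<and> (\<forall>i<m. (\<Sum>\<alpha>\<in>S. c \<alpha> * (\<sigma>^^i) \<alpha>) = 0)}"
  define supp where "supp c = {\<alpha>\<in>S. c \<alpha> \<noteq> 0}" for c :: "'a \<Rightarrow> 'a"
  have "\<exists>c. (\<forall>j\<in>S. c j \<in> center) \<and> (\<exists>j\<in>S. c j \<noteq> 0) \<and> (\<forall>i\<in>{..<m}. (\<Sum>j\<in>S. c j * (\<sigma>^^i) j) = 0)"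
    using S by (intro homogeneous_system_nontrivial_solution[OF subdivring_center]) (auto intro: sigma_pow_center)
  then obtain c0 where "c0 \<in> Sol" unfolding Sol_def by auto
  define n0 where "n0 = (LEAST n. \<exists>c\<in>Sol. card (supp c) = n)"
  obtain c where c: "c \<in> Sol" "card (supp c) = n0"
    using LeastI_ex[of "\<lambda>n. \<exists>c\<in>Sol. card (supp c) = n"] \<open>c0 \<in> Sol\<close> unfolding n0_def by blast
  have c_min: "n0 \<le> card (supp d)" if "d \<in> Sol" for d
    unfolding n0_def using that by (intro Least_le) blast
  from c(1) obtain \<alpha>0 where a0: "\<alpha>0 \<in> S" "c \<alpha>0 \<noteq> 0" unfolding Sol_def by blast
  define c' where "c' \<alpha> = inverse (c \<alpha>0) * c \<alpha>" for \<alpha>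
  have c'_center: "\<forall>\<alpha>\<in>S. c' \<alpha> \<in> center"
    using c a0 subdivring_center unfolding c'_def Sol_def by (blast intro: subdivring_mult subdivring_inverse)
  have c'_sol: "\<forall>i<m. (\<Sum>\<alpha>\<in>S. c' \<alpha> * (\<sigma>^^i) \<alpha>) = 0"
    using c unfolding c'_def Sol_def by (simp add: mult.assoc sum_distrib_left[symmetric])
  have c'a0: "c' \<alpha>0 = 1" using a0 unfolding c'_def by simp
  \<comment> \<open>\<open>c' - \<sigma> \<circ> c'\<close> is a solution with smaller support, hence zero\<close>
  define c'' where "c'' \<alpha> = c' \<alpha> - \<sigma> (c' \<alpha>)" for \<alpha>
  have "\<forall>\<alpha>\<in>S. c'' \<alpha> = 0"
  proof (rule ccontr)
    assume "\<not> ?thesis"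
    moreover have "\<forall>\<alpha>\<in>S. c'' \<alpha> \<in> center"
      unfolding c''_def using c'_center by (blast intro: subdivring_diff[OF subdivring_center] sigma_center)
    moreover have "\<forall>i<m. (\<Sum>\<alpha>\<in>S. c'' \<alpha> * (\<sigma>^^i) \<alpha>) = 0"
      using c'_sol sigma_shift_relation[OF ord S(1) c'_sol]
      unfolding c''_def by (simp add: left_diff_distrib sum_subtractf)
    ultimately have "c'' \<in> Sol" unfolding Sol_def by blast
    moreover have "supp c'' \<subset> supp c"
    proof -
      have "supp c'' \<subseteq> supp c' - {\<alpha>0}"
        unfolding supp_def c''_def using c'a0 by (auto simp: sigma_one sigma_zero)
      moreover have "supp c' = supp c" unfolding supp_def c'_def using a0 by auto
      ultimately show ?thesis using a0 unfolding supp_def by auto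
    qed
    then have "card (supp c'') < card (supp c)" using S(2) unfolding supp_def by (intro psubset_card_mono) auto
    ultimately show False using c_min c(2) by fastforce
  qed
  then have "\<forall>\<alpha>\<in>S. c' \<alpha> \<in> fixed_center \<sigma>" using c'_center unfolding c''_def fixed_center_def by auto
  moreover have "(\<Sum>\<alpha>\<in>S. c' \<alpha> * \<alpha>) = 0" using c'_sol m0 by auto
  moreover have "\<exists>\<gamma>\<in>S. c' \<gamma> \<noteq> 0" using a0(1) c'a0 by force
  ultimately show ?thesis by blast
qed

definition fixed_center_indep :: "'a set \<Rightarrow> bool" where
  "fixed_center_indep S \<longleftrightarrow>
    (\<forall>e. (\<forall>\<gamma>\<in>S. e \<gamma> \<in> fixed_center \<sigma>) \<and> (\<Sum>\<gamma>\<in>S. e \<gamma> * \<gamma>) = 0 \<longrightarrow> (\<forall>\<gamma>\<in>S. e \<gamma> = 0))"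

text \<open>A maximal independent subset of \<open>F\<close>, which exists by Artin's lemma, spans \<open>F\<close>.\<close>

lemma center_finite_span:
  assumes ord: "order_on_center \<sigma> m"
  shows "\<exists>C. finite C \<and> (\<forall>x\<in>center. \<exists>e. (\<forall>\<gamma>\<in>C. e \<gamma> \<in> fixed_center \<sigma>) \<and> x = (\<Sum>\<gamma>\<in>C. e \<gamma> * \<gamma>))"
proof -
  define P where "P n \<longleftrightarrow> (\<exists>S. S \<subseteq> center \<and> finite S \<and> card S = n \<and> fixed_center_indep S)" for n
  have P0: "P 0" unfolding P_def fixed_center_indep_def by (intro exI[of _ "{}"]) auto
  have bounded: "\<forall>n. P n \<longrightarrow> n \<le> m"
  proof (intro allI impI)
    fix n assume "P n"
    then obtain S where S: "S \<subseteq> center" "finite S" "card S = n" "fixed_center_indep S"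
      unfolding P_def by blast
    show "n \<le> m"
    proof (rule ccontr)
      assume "\<not> n \<le> m"
      then obtain e where "\<forall>\<gamma>\<in>S. e \<gamma> \<in> fixed_center \<sigma>" "\<exists>\<gamma>\<in>S. e \<gamma> \<noteq> 0" "(\<Sum>\<gamma>\<in>S. e \<gamma> * \<gamma>) = 0"
        using artin_dependence[OF ord S(1,2)] S(3) by auto
      then show False using S(4) unfolding fixed_center_indep_def by blast
    qed
  qed
  obtain n where n: "P n" "\<forall>y. P y \<longrightarrow> y \<le> n" using Nat.ex_has_greatest_nat[OF P0 bounded] by blast
  then obtain S where S: "S \<subseteq> center" "finite S" "card S = n" "fixed_center_indep S"
    unfolding P_def by blast
  have "\<exists>e. (\<forall>\<gamma>\<in>S. e \<gamma> \<in> fixed_center \<sigma>) \<and> x = (\<Sum>\<gamma>\<in>S. e \<gamma> * \<gamma>)" if x: "x \<in> center" for x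
  proof (cases "x \<in> S")
    case True
    have "(\<Sum>\<gamma>\<in>S. (if \<gamma> = x then 1 else 0) * \<gamma>) = (if x = x then 1 else 0) * x"
      using True S(2) by (intro sum_eq_single) auto
    moreover have "\<forall>\<gamma>\<in>S. (if \<gamma> = x then 1 else 0) \<in> fixed_center \<sigma>"
      using subdivring_fixed_center by (simp add: subdivring_0 subdivring_1)
    ultimately show ?thesis by (intro exI[of _ "\<lambda>\<gamma>. if \<gamma> = x then 1 else 0"]) simp
  next
    case False
    have "\<not> P (Suc n)" using n(2) by fastforce
    then have "\<not> fixed_center_indep (insert x S)" unfolding P_def using S x False by auto
    then obtain e where e: "\<forall>\<gamma>\<in>insert x S. e \<gamma> \<in> fixed_center \<sigma>" "(\<Sum>\<gamma>\<in>insert x S. e \<gamma> * \<gamma>) = 0"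
       "\<exists>\<gamma>\<in>insert x S. e \<gamma> \<noteq> 0" unfolding fixed_center_indep_def by blast
    have sum_eq: "e x * x + (\<Sum>\<gamma>\<in>S. e \<gamma> * \<gamma>) = 0" using e(2) False S(2) by simp
    have ex: "e x \<noteq> 0"
    proof
      assume "e x = 0"
      then have "(\<Sum>\<gamma>\<in>S. e \<gamma> * \<gamma>) = 0" using sum_eq by simp
      then have "\<forall>\<gamma>\<in>S. e \<gamma> = 0" using S(4) e(1) unfolding fixed_center_indep_def by blast
      then show False using e(3) \<open>e x = 0\<close> by auto
    qed
    define k where "k = - inverse (e x)"
    have "e x * x = - (\<Sum>\<gamma>\<in>S. e \<gamma> * \<gamma>)" using sum_eq by (simp add: eq_neg_iff_add_eq_0)
    then have "inverse (e x) * (e x * x) = inverse (e x) * - (\<Sum>\<gamma>\<in>S. e \<gamma> * \<gamma>)" by simp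
    then have "x = k * (\<Sum>\<gamma>\<in>S. e \<gamma> * \<gamma>)" using ex unfolding k_def by (simp add: mult.assoc[symmetric])
    then have "x = (\<Sum>\<gamma>\<in>S. (k * e \<gamma>) * \<gamma>)" by (simp add: sum_distrib_left mult.assoc)
    moreover have "\<forall>\<gamma>\<in>S. k * e \<gamma> \<in> fixed_center \<sigma>"
      using e(1) subdivring_fixed_center unfolding k_def
      by (blast intro: subdivring_mult subdivring_uminus subdivring_inverse)
    ultimately show ?thesis by (intro exI[of _ "\<lambda>\<gamma>. k * e \<gamma>"]) simp
  qed
  then show ?thesis using S(2) by blast
qed

lemma finite_span_over_fixed_center:
  assumes ord: "order_on_center \<sigma> m" and fd: "fin_dim_over_center TYPE('a)"
  shows "\<exists>(G::('a \<times> 'a) set) g. finite G \<and>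
    (\<forall>x. \<exists>e. (\<forall>i\<in>G. e i \<in> fixed_center \<sigma>) \<and> x = (\<Sum>i\<in>G. e i * g i))"
proof -
  obtain C where C: "finite C" "\<forall>x\<in>center. \<exists>e. (\<forall>\<gamma>\<in>C. e \<gamma> \<in> fixed_center \<sigma>) \<and> x = (\<Sum>\<gamma>\<in>C. e \<gamma> * \<gamma>)"
    using center_finite_span[OF ord] by blast
  obtain B :: "'a set" where B: "finite B" "\<forall>x. \<exists>c. (\<forall>b\<in>B. c b \<in> center) \<and> x = (\<Sum>b\<in>B. c b * b)"
    using fd unfolding fin_dim_over_center_def by blast
  have "\<exists>e. (\<forall>i\<in>B \<times> C. e i \<in> fixed_center \<sigma>) \<and> x = (\<Sum>i\<in>B \<times> C. e i * (snd i * fst i))" for x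
  proof -
    obtain c where c: "\<forall>b\<in>B. c b \<in> center" "x = (\<Sum>b\<in>B. c b * b)" using B(2) by blast
    have "\<forall>b\<in>B. \<exists>e. (\<forall>\<gamma>\<in>C. e \<gamma> \<in> fixed_center \<sigma>) \<and> c b = (\<Sum>\<gamma>\<in>C. e \<gamma> * \<gamma>)"
      using C(2) c(1) by blast
    then obtain E where E: "\<forall>b\<in>B. (\<forall>\<gamma>\<in>C. E b \<gamma> \<in> fixed_center \<sigma>) \<and> c b = (\<Sum>\<gamma>\<in>C. E b \<gamma> * \<gamma>)"
      by metis
    have "x = (\<Sum>b\<in>B. (\<Sum>\<gamma>\<in>C. E b \<gamma> * \<gamma>) * b)" using c(2) E by (auto intro: sum.cong)
    also have "\<dots> = (\<Sum>b\<in>B. \<Sum>\<gamma>\<in>C. E b \<gamma> * (\<gamma> * b))"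
      by (simp add: sum_distrib_right mult.assoc)
    also have "\<dots> = (\<Sum>i\<in>B \<times> C. E (fst i) (snd i) * (snd i * fst i))"
      by (simp add: sum.cartesian_product case_prod_beta)
    finally show ?thesis using E by (intro exI[of _ "\<lambda>i. E (fst i) (snd i)"]) auto
  qed
  then show ?thesis using B(1) C(1)
    by (intro exI[of _ "B \<times> C"], intro exI[of _ "\<lambda>i. snd i * fst i"]) auto
qed

end

section \<open>The algebra \<open>(D, \<sigma>, d)\<close> on polynomials of degree \<open>< m\<close>\<close>

context ring_automorphism
begin

definition tm_poly :: "nat \<Rightarrow> 'a \<Rightarrow> 'a poly" where
  "tm_poly m d = monom 1 m - monom d 0"

lemma coeff_tm_poly: "coeff (tm_poly m d) n = (if n = m then 1 else 0) - (if n = 0 then d else 0)"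
  by (simp add: tm_poly_def coeff_monom)

lemma degree_tm_poly:
  assumes "0 < m"
  shows "degree (tm_poly m d) = m" "tm_poly m d \<noteq> 0"
proof -
  have "coeff (tm_poly m d) m = 1" using assms by (simp add: coeff_tm_poly)
  moreover have "degree (tm_poly m d) \<le> m" by (rule degree_le) (simp add: coeff_tm_poly)
  ultimately show "degree (tm_poly m d) = m" "tm_poly m d \<noteq> 0"
    by (metis le_antisym le_degree one_neq_zero, auto)
qed

lemma lscale_eq_tmult: "lscale k p = tmult (monom k 0) p"
  by (rule poly_eqI) (simp add: coeff_tmult_const_left)

lemma lscale_tmult_left: "lscale k (tmult q f) = tmult (lscale k q) f"
  by (simp add: lscale_eq_tmult tmult_assoc)

lemma tmult_lscale_right:
  assumes "k \<in> fixed_center \<sigma>"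
  shows "tmult a (lscale k x) = lscale k (tmult a x)"
proof (rule poly_eqI)
  fix n
  have k: "k * y = y * k" "(\<sigma>^^i) k = k" for y i
    using assms sigma_pow_fixed unfolding fixed_center_def center_def by blast+
  have "coeff (tmult a (lscale k x)) n = (\<Sum>i\<le>n. coeff a i * (k * (\<sigma>^^i) (coeff x (n - i))))"
    unfolding coeff_tmult by (simp add: sigma_pow_mult k)
  also have "\<dots> = (\<Sum>i\<le>n. k * (coeff a i * (\<sigma>^^i) (coeff x (n - i))))"
    by (intro sum.cong refl) (metis k(1) mult.assoc)
  finally show "coeff (tmult a (lscale k x)) n = coeff (lscale k (tmult a x)) n"
    by (simp add: coeff_tmult sum_distrib_left)
qed

context
  fixes m :: nat and d :: 'a
  assumes m0: "0 < m"
begin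

lemma tm_division: "\<exists>q r. p = tmult q (tm_poly m d) + r \<and> degree r < m"
proof -
  obtain q r where "p = tmult q (tm_poly m d) + r" "r = 0 \<or> degree r < degree (tm_poly m d)"
    using right_division[OF degree_tm_poly(2)[OF m0]] by blast
  then show ?thesis using m0 degree_tm_poly(1)[OF m0] by (metis degree_0)
qed

lemma tm_division_unique:
  assumes "tmult q1 (tm_poly m d) + r1 = tmult q2 (tm_poly m d) + r2" "degree r1 < m" "degree r2 < m"
  shows "r1 = r2"
proof (rule ccontr)
  have eq: "tmult (q1 - q2) (tm_poly m d) = r2 - r1"
    using assms(1) by (simp add: tmult_diff_left algebra_simps)
  assume "r1 \<noteq> r2"
  then have "q1 \<noteq> q2" using eq by auto
  then have "degree (tmult (q1 - q2) (tm_poly m d)) = degree (q1 - q2) + m"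
    using degree_tm_poly[OF m0] by (simp add: degree_tmult)
  moreover have "degree (r2 - r1) < m" using assms by (simp add: degree_diff_less)
  ultimately show False using eq by simp
qed

definition trem :: "'a poly \<Rightarrow> 'a poly" where
  "trem p = (THE r. degree r < m \<and> (\<exists>q. p = tmult q (tm_poly m d) + r))"

lemma trem: "degree (trem p) < m" "\<exists>q. p = tmult q (tm_poly m d) + trem p"
proof -
  obtain q r where qr: "p = tmult q (tm_poly m d) + r" "degree r < m" using tm_division by blast
  have "trem p = r" unfolding trem_def
  proof (rule the_equality)
    fix r' assume "degree r' < m \<and> (\<exists>q. p = tmult q (tm_poly m d) + r')"
    then obtain q' where "p = tmult q' (tm_poly m d) + r'" "degree r' < m" by blast
    then show "r' = r" using tm_division_unique[of q' r' q r] qr by simp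
  qed (use qr in blast)
  then show "degree (trem p) < m" "\<exists>q. p = tmult q (tm_poly m d) + trem p" using qr by auto
qed

lemma trem_eqI:
  assumes "p = tmult q (tm_poly m d) + r" "degree r < m"
  shows "trem p = r"
proof -
  obtain q' where "p = tmult q' (tm_poly m d) + trem p" using trem(2) by blast
  then have "tmult q' (tm_poly m d) + trem p = tmult q (tm_poly m d) + r" using assms(1) by metis
  then show ?thesis using tm_division_unique trem(1) assms(2) by blast
qed

lemma trem_small: "degree p < m \<Longrightarrow> trem p = p"
  by (rule trem_eqI[of _ 0]) auto

lemma trem_add: "trem (p + q) = trem p + trem q"
proof -
  obtain a b where "p = tmult a (tm_poly m d) + trem p" "q = tmult b (tm_poly m d) + trem q"
    using trem by metis
  then have "p + q = tmult (a + b) (tm_poly m d) + (trem p + trem q)"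
    by (simp add: tmult_add_left algebra_simps)
  then show ?thesis using trem by (intro trem_eqI) (auto intro: degree_add_less)
qed

lemma trem_diff: "trem (p - q) = trem p - trem q"
proof -
  obtain a b where "p = tmult a (tm_poly m d) + trem p" "q = tmult b (tm_poly m d) + trem q"
    using trem by metis
  then have "p - q = tmult (a - b) (tm_poly m d) + (trem p - trem q)"
    by (simp add: tmult_diff_left algebra_simps)
  then show ?thesis using trem by (intro trem_eqI) (auto intro: degree_diff_less)
qed

lemma trem_lscale: "trem (lscale k p) = lscale k (trem p)"
proof -
  obtain a where "p = tmult a (tm_poly m d) + trem p" using trem by metis
  then have "lscale k p = tmult (lscale k a) (tm_poly m d) + lscale k (trem p)"
    by (metis lscale_add lscale_tmult_left)
  then show ?thesis using trem(1) degree_lscale_le by (intro trem_eqI) (auto intro: le_less_trans)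
qed

lemma low_degree_finite_span:
  assumes ord: "order_on_center \<sigma> m'" and fd: "fin_dim_over_center TYPE('a)"
  shows "\<exists>(I::(nat \<times> ('a \<times> 'a)) set) s. finite I \<and> (\<forall>x. degree x < m \<longrightarrow>
     (\<exists>e. (\<forall>i\<in>I. e i \<in> fixed_center \<sigma>) \<and> x = (\<Sum>i\<in>I. lscale (e i) (s i))))"
proof -
  obtain G :: "('a \<times> 'a) set" and g where G: "finite G"
    "\<forall>x. \<exists>e. (\<forall>i\<in>G. e i \<in> fixed_center \<sigma>) \<and> x = (\<Sum>i\<in>G. e i * g i)"
    using finite_span_over_fixed_center[OF ord fd] by blast
  obtain E where E: "\<forall>x. (\<forall>i\<in>G. E x i \<in> fixed_center \<sigma>) \<and> x = (\<Sum>i\<in>G. E x i * g i)"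
    using choice[OF G(2)] by blast
  have expand: "x = (\<Sum>i\<in>{..<m} \<times> G. lscale (E (coeff x (fst i)) (snd i)) (monom (g (snd i)) (fst i)))"
    if x: "degree x < m" for x
  proof -
    have "x = (\<Sum>j\<le>m - 1. monom (coeff x j) j)"
      using x m0 by (intro poly_as_sum_of_monoms'[symmetric]) auto
    also have "{..m - 1} = {..<m}" using m0 by auto
    also have "(\<Sum>j<m. monom (coeff x j) j) = (\<Sum>j<m. \<Sum>i\<in>G. lscale (E (coeff x j) i) (monom (g i) j))"
    proof (intro sum.cong refl)
      fix j
      have "monom (coeff x j) j = monom (\<Sum>i\<in>G. E (coeff x j) i * g i) j"
        using E by (intro arg_cong[where f="\<lambda>c. monom c j"]) blast
      also have "\<dots> = (\<Sum>i\<in>G. lscale (E (coeff x j) i) (monom (g i) j))"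
        unfolding monom_sum by (intro sum.cong refl poly_eqI) (simp add: coeff_monom)
      finally show "monom (coeff x j) j = (\<Sum>i\<in>G. lscale (E (coeff x j) i) (monom (g i) j))" .
    qed
    also have "\<dots> = (\<Sum>i\<in>{..<m} \<times> G. lscale (E (coeff x (fst i)) (snd i)) (monom (g (snd i)) (fst i)))"
      unfolding sum.cartesian_product by (rule sum.cong) auto
    finally show ?thesis .
  qed
  have "\<exists>e. (\<forall>i\<in>{..<m} \<times> G. e i \<in> fixed_center \<sigma>)
      \<and> x = (\<Sum>i\<in>{..<m} \<times> G. lscale (e i) (monom (g (snd i)) (fst i)))" if "degree x < m" for x
    using E expand[OF that] by (intro exI[of _ "\<lambda>i. E (coeff x (fst i)) (snd i)"]) auto
  moreover have "finite ({..<m} \<times> G)" using G(1) by simp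
  ultimately show ?thesis
    by (intro exI[of _ "{..<m} \<times> G"] exI[of _ "\<lambda>i. monom (g (snd i)) (fst i)"]) blast
qed

text \<open>
  Both multiplications of \<open>(D, \<sigma>, d)\<close> by a nonzero element are \<open>F\<^sub>0\<close>-linear and injective,
  the latter because an irreducible \<open>t\<^sup>m - d\<close> admits no zero divisors of degree \<open>< m\<close>.
\<close>

lemma trem_tmult_bij:
  assumes ord: "order_on_center \<sigma> m'" and fd: "fin_dim_over_center TYPE('a)"
    and irr: "tirreducible (tm_poly m d)" and a: "degree a < m" "a \<noteq> 0"
  shows "bij_betw (\<lambda>x. trem (tmult a x)) {x. degree x < m} {x. degree x < m}"
    "bij_betw (\<lambda>x. trem (tmult x a)) {x. degree x < m} {x. degree x < m}"
proof -
  let ?V = "{x :: 'a poly. degree x < m}"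
  obtain I :: "(nat \<times> ('a \<times> 'a)) set" and s where span: "finite I" "\<forall>x\<in>?V.
     \<exists>e. (\<forall>i\<in>I. e i \<in> fixed_center \<sigma>) \<and> x = (\<Sum>i\<in>I. lscale (e i) (s i))"
    using low_degree_finite_span[OF ord fd] by blast
  have linear_bij: "bij_betw T ?V ?V"
    if T_V: "\<forall>x\<in>?V. T x \<in> ?V"
    and T_add: "\<forall>x\<in>?V. \<forall>y\<in>?V. T (x + y) = T x + T y"
    and T_diff: "\<forall>x\<in>?V. \<forall>y\<in>?V. T (x - y) = T x - T y"
    and T_lscale: "\<forall>k\<in>fixed_center \<sigma>. \<forall>x\<in>?V. T (lscale k x) = lscale k (T x)"
    and T_inj: "\<forall>x\<in>?V. T x = 0 \<longrightarrow> x = 0" for T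
  proof (rule bij_betw_imageI)
    show "inj_on T ?V"
    proof (rule inj_onI)
      fix x y assume "x \<in> ?V" "y \<in> ?V" "T x = T y"
      then have "T (x - y) = 0" "x - y \<in> ?V" using T_diff by (auto simp: degree_diff_less)
      then show "x = y" using T_inj by auto
    qed
    have "\<exists>x\<in>?V. T x = y" if "y \<in> ?V" for y
      using m0 that
      by (intro injective_linear_map_surj[OF subdivring_fixed_center span(1) span(2) _ _ _ T_V T_add
            T_lscale T_inj]) (auto intro: degree_add_less le_less_trans[OF degree_lscale_le])
    then show "T ` ?V = ?V" using T_V by blast
  qed
  have tm: "degree (tm_poly m d) = m" using degree_tm_poly m0 by simp
  show "bij_betw (\<lambda>x. trem (tmult a x)) ?V ?V"
  proof (rule linear_bij)
    show "\<forall>x\<in>?V. trem (tmult a x) = 0 \<longrightarrow> x = 0"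
    proof (intro ballI impI)
      fix x assume x: "x \<in> ?V" and "trem (tmult a x) = 0"
      moreover obtain q where "tmult a x = tmult q (tm_poly m d) + trem (tmult a x)" using trem by blast
      ultimately show "x = 0" using tirreducible_no_zero_divisor[OF irr, of x a q] a tm by auto
    qed
  qed (auto simp: trem tmult_add_right trem_add tmult_diff_right trem_diff tmult_lscale_right trem_lscale)
  show "bij_betw (\<lambda>x. trem (tmult x a)) ?V ?V"
  proof (rule linear_bij)
    show "\<forall>x\<in>?V. trem (tmult x a) = 0 \<longrightarrow> x = 0"
    proof (intro ballI impI)
      fix x assume x: "x \<in> ?V" and "trem (tmult x a) = 0"
      moreover obtain q where "tmult x a = tmult q (tm_poly m d) + trem (tmult x a)" using trem by blast
      ultimately show "x = 0" using tirreducible_no_zero_divisor[OF irr a(2), of x q] a tm by auto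
    qed
  qed (auto simp: trem tmult_add_left trem_add tmult_diff_left trem_diff lscale_tmult_left[symmetric]
      trem_lscale)
qed

end

end

section \<open>The automorphism \<open>t \<mapsto> w t\<close>\<close>

definition tscale :: "'a::division_ring \<Rightarrow> 'a poly \<Rightarrow> 'a poly" where
  "tscale w p = Abs_poly (\<lambda>n. w ^ n * coeff p n)"

lemma coeff_tscale [simp]: "coeff (tscale w p) n = w ^ n * coeff p n"
  unfolding tscale_def by (subst coeff_Abs_poly[where n="degree p"]) (simp_all add: coeff_eq_0)

lemma tscale_add: "tscale w (p + q) = tscale w p + tscale w q"
  by (rule poly_eqI) (simp add: distrib_left)

lemma coeff_funpow_tscale: "coeff ((tscale w ^^ k) p) n = (w ^ n) ^ k * coeff p n"
  by (induction k) (simp_all add: mult.assoc power_Suc)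

lemma degree_tscale: "w \<noteq> 0 \<Longrightarrow> degree (tscale w p) = degree p"
  by (rule degree_cong) simp

lemma tscale_eq_0_iff: "w \<noteq> 0 \<Longrightarrow> tscale w p = 0 \<longleftrightarrow> p = 0"
  by (auto simp: poly_eq_iff)

lemma funpow_tscale_root_of_unity:
  assumes "w ^ m = 1"
  shows "(tscale w ^^ m) p = p"
proof (rule poly_eqI)
  fix n
  have "(w ^ n) ^ m = 1" by (metis assms power_mult power_mult_distrib mult.commute power_one)
  then show "coeff ((tscale w ^^ m) p) n = coeff p n" by (simp add: coeff_funpow_tscale)
qed

context ring_automorphism
begin

lemma tscale_tmult:
  assumes w: "w \<in> fixed_center \<sigma>"
  shows "tscale w (tmult p q) = tmult (tscale w p) (tscale w q)"
proof (rule poly_eqI)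
  fix n
  have "w * y = y * w" for y using w unfolding fixed_center_def center_def by blast
  then have w_comm: "w ^ k * y = y * w ^ k" for y k
    by (induction k) (simp_all add: mult.assoc, metis mult.assoc)
  have w_fixed: "(\<sigma>^^i) (w ^ k) = w ^ k" for i k
    using w sigma_pow_fixed by (induction k) (simp_all add: sigma_pow_mult)
  have "coeff (tmult (tscale w p) (tscale w q)) n
      = (\<Sum>i\<le>n. w ^ i * coeff p i * (w ^ (n - i) * (\<sigma>^^i) (coeff q (n - i))))"
    by (simp add: coeff_tmult sigma_pow_mult w_fixed)
  also have "\<dots> = (\<Sum>i\<le>n. w ^ n * (coeff p i * (\<sigma>^^i) (coeff q (n - i))))"
  proof (rule sum.cong[OF refl])
    fix i assume "i \<in> {..n}"
    then have "w ^ n = w ^ i * w ^ (n - i)" by (simp add: power_add[symmetric])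
    moreover have "coeff p i * (w ^ (n - i) * X) = w ^ (n - i) * (coeff p i * X)" for X
      using w_comm[of "n - i" "coeff p i"] by (simp add: mult.assoc[symmetric])
    ultimately show "w ^ i * coeff p i * (w ^ (n - i) * (\<sigma>^^i) (coeff q (n - i)))
        = w ^ n * (coeff p i * (\<sigma>^^i) (coeff q (n - i)))"
      by (simp add: mult.assoc)
  qed
  finally show "coeff (tscale w (tmult p q)) n = coeff (tmult (tscale w p) (tscale w q)) n"
    by (simp add: coeff_tmult sum_distrib_left)
qed

lemma tscale_tm_poly: "w ^ m = 1 \<Longrightarrow> tscale w (tm_poly m d) = tm_poly m d"
  by (rule poly_eqI) (auto simp: coeff_tm_poly right_diff_distrib)

lemma right_dvd_funpow_tscale:
  assumes "w \<in> fixed_center \<sigma>" "right_dvd h p"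
  shows "right_dvd ((tscale w ^^ i) h) ((tscale w ^^ i) p)"
proof -
  have "(tscale w ^^ i) (tmult a h) = tmult ((tscale w ^^ i) a) ((tscale w ^^ i) h)" for a
    by (induction i) (simp_all add: tscale_tmult[OF assms(1)])
  then show ?thesis using assms(2) unfolding right_dvd_def by metis
qed

lemma trem_tscale:
  assumes m0: "0 < m" and w: "w \<in> fixed_center \<sigma>" "w ^ m = 1"
  shows "tscale w (trem m d p) = trem m d (tscale w p)"
proof -
  have "w \<noteq> 0" using w(2) m0 by (metis power_0_left zero_neq_one less_not_refl)
  obtain q where "p = tmult q (tm_poly m d) + trem m d p" using trem[OF m0] by blast
  then have "tscale w p = tmult (tscale w q) (tm_poly m d) + tscale w (trem m d p)"
    by (metis tscale_add tscale_tmult[OF w(1)] tscale_tm_poly[OF w(2)])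
  moreover have "degree (tscale w (trem m d p)) < m"
    using trem(1)[OF m0] degree_tscale[OF \<open>w \<noteq> 0\<close>] by simp
  ultimately show ?thesis using trem_eqI[OF m0] by metis
qed

section \<open>Irreducibility of \<open>t\<^sup>m - d\<close> for prime \<open>m\<close>\<close>

lemma right_dvd_norm_difference:
  "right_dvd (monom 1 1 - monom z 0) (monom 1 n - monom (twisted_norm \<sigma> n z) 0)"
  unfolding right_dvd_def
proof (induction n)
  case 0
  then show ?case by (intro exI[of _ 0]) simp
next
  case (Suc n)
  then obtain Q where Q: "monom 1 n - monom (twisted_norm \<sigma> n z) 0 = tmult Q (monom 1 1 - monom z 0)"
    by blast
  \<comment> \<open>\<open>t\<^sup>n\<^sup>+\<^sup>1 - N\<^sub>n\<^sub>+\<^sub>1(z) = t\<^sup>n (t - z) + \<sigma>\<^sup>n(z) (t\<^sup>n - N\<^sub>n(z))\<close>\<close>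
  have "monom 1 (Suc n) - monom (twisted_norm \<sigma> (Suc n) z) 0
      = tmult (monom 1 n) (monom 1 1 - monom z 0)
        + tmult (monom ((\<sigma>^^n) z) 0) (monom 1 n - monom (twisted_norm \<sigma> n z) 0)"
    by (simp add: tmult_diff_right tmult_monom_monom)
  also have "\<dots> = tmult (monom 1 n + tmult (monom ((\<sigma>^^n) z) 0) Q) (monom 1 1 - monom z 0)"
    unfolding Q by (simp add: tmult_add_left tmult_assoc)
  finally show ?case by blast
qed

lemma norm_if_linear_right_factor:
  assumes h: "right_dvd h (tm_poly m d)" "degree h = 1"
  shows "\<exists>z. d = twisted_norm \<sigma> m z"
proof -
  define a where "a = coeff h 1"
  define z where "z = - (inverse a * coeff h 0)"
  define lin where "lin = monom 1 1 - monom z 0"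
  have a: "a \<noteq> 0" using h(2) unfolding a_def by (metis leading_coeff_0_iff degree_0 zero_neq_one)
  have "h = tmult (monom a 0) lin"
  proof (rule poly_eqI)
    fix n
    show "coeff h n = coeff (tmult (monom a 0) lin) n"
    proof (cases "n \<le> 1")
      case True
      then consider "n = 0" | "n = 1" by linarith
      then show ?thesis
        using a by cases (simp_all add: coeff_tmult_const_left lin_def z_def a_def coeff_monom
            mult.assoc[symmetric])
    qed (simp add: coeff_tmult_const_left lin_def coeff_monom coeff_eq_0 h(2))
  qed
  then obtain G where G: "tm_poly m d = tmult G lin"
    using h(1) unfolding right_dvd_def by (metis tmult_assoc)
  obtain Q where Q: "monom 1 m - monom (twisted_norm \<sigma> m z) 0 = tmult Q lin"
    using right_dvd_norm_difference unfolding right_dvd_def lin_def by blast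
  have "tmult (G - Q) lin = (monom 1 m - monom d 0) - (monom 1 m - monom (twisted_norm \<sigma> m z) 0)"
    using G Q by (simp add: tmult_diff_left tm_poly_def)
  also have "\<dots> = monom (twisted_norm \<sigma> m z - d) 0" by (simp add: poly_eq_iff coeff_monom)
  finally have eq: "tmult (G - Q) lin = monom (twisted_norm \<sigma> m z - d) 0" .
  have "coeff lin 1 = 1" "degree lin \<le> 1"
    by (auto simp: lin_def coeff_monom intro!: degree_diff_le order.trans[OF degree_monom_le])
  then have "degree lin = 1" "lin \<noteq> 0" by (metis le_antisym le_degree one_neq_zero, auto)
  then have "G - Q = 0"
    using eq degree_tmult[of "G - Q" lin] by (metis add_is_0 degree_monom_le le_zero_eq one_neq_zero)
  then show ?thesis using eq by (metis monom_eq_0_iff right_minus_eq tmult_0_left)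
qed

lemma common_left_multiples_generator:
  fixes hs :: "nat \<Rightarrow> 'a poly"
  assumes hs: "\<And>i. hs i \<noteq> 0" "\<And>i. degree (hs i) = k"
    and min: "\<And>i r. right_dvd r (hs i) \<Longrightarrow> degree r = 0 \<or> k \<le> degree r"
  shows "\<exists>L. L \<noteq> 0 \<and> (\<forall>i\<le>j. right_dvd (hs i) L)
    \<and> (\<forall>p. (\<forall>i\<le>j. right_dvd (hs i) p) \<longrightarrow> right_dvd L p) \<and> k dvd degree L"
proof (induction j)
  case 0
  have "hs 0 \<noteq> 0 \<and> right_dvd (hs 0) (hs 0) \<and> (\<forall>p. right_dvd (hs 0) p \<longrightarrow> right_dvd (hs 0) p)
      \<and> k dvd degree (hs 0)"
    using hs right_dvd_refl by simp
  then show ?case by auto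
next
  case (Suc j)
  define M where "M = {p. \<forall>i\<le>j. right_dvd (hs i) p}"
  have M: "left_ideal M" unfolding left_ideal_def M_def by (auto intro: right_dvd_diff right_dvd_tmult_left)
  obtain L where L: "L \<noteq> 0" "L \<in> M" "\<forall>p\<in>M. right_dvd L p" "k dvd degree L"
    using Suc.IH unfolding M_def by blast
  obtain L' where L': "L' \<in> M" "right_dvd (hs (Suc j)) L'" "L' \<noteq> 0"
    "\<forall>p. p \<in> M \<and> right_dvd (hs (Suc j)) p \<longrightarrow> right_dvd L' p"
    "degree L' = degree L \<or> degree L' = degree L + degree (hs (Suc j))"
    using common_multiple_generator_step[OF L(1-3) hs(1)[of "Suc j"] _ M] min[of _ "Suc j"]
    unfolding hs(2) by blast
  have "k dvd degree L'" using L'(5) L(4) hs(2) by auto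
  then show ?case using L' unfolding M_def by (auto simp: le_Suc_eq)
qed

text \<open>
  Here \<open>tscale w L = c L\<close> with \<open>c\<close> constant; comparing coefficients gives \<open>w\<^bsup>degree L\<^esup> = c = w\<^sup>0\<close>,
  since the constant term of a right divisor of \<open>t\<^sup>m - d\<close> cannot vanish.
\<close>

lemma tscale_invariant_right_divisor:
  assumes w: "w \<in> fixed_center \<sigma>" "primitive_root m w" and m0: "0 < m" and d: "d \<noteq> 0"
    and L: "right_dvd L (tm_poly m d)" "L \<noteq> 0" "0 < degree L" and inv: "right_dvd L (tscale w L)"
  shows "degree L = m"
proof -
  have wm: "w ^ m = 1" and wprim: "\<And>k. 0 < k \<Longrightarrow> k < m \<Longrightarrow> w ^ k \<noteq> 1"
    using w(2) unfolding primitive_root_def by auto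
  have w0: "w \<noteq> 0" using wm m0 by (metis power_0_left zero_neq_one less_not_refl)
  obtain c where c: "tscale w L = tmult c L" using inv unfolding right_dvd_def by blast
  then have "c \<noteq> 0" using L(2) tscale_eq_0_iff[OF w0] by fastforce
  then have "degree c = 0" using c L(2) degree_tscale[OF w0, of L] by (simp add: degree_tmult)
  then have "tscale w L = tmult (monom (coeff c 0) 0) L" using c degree_0_monom by metis
  then have coeffs: "w ^ n * coeff L n = coeff c 0 * coeff L n" for n
    by (metis coeff_tmult_const_left coeff_tscale)
  have cancel: "a = b" if "a * x = b * x" "x \<noteq> 0" for a b x :: 'a
    using that by (metis mult.assoc right_inverse mult_1_right)
  have "coeff c 0 = w ^ degree L" using cancel[OF coeffs[of "degree L"]] L(2) by simp
  have "coeff L 0 \<noteq> 0"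
  proof
    assume "coeff L 0 = 0"
    obtain q where "tm_poly m d = tmult q L" using L(1) unfolding right_dvd_def by blast
    then have "coeff (tm_poly m d) 0 = 0" using \<open>coeff L 0 = 0\<close> by (simp add: coeff_tmult)
    then show False using m0 d by (simp add: coeff_tm_poly)
  qed
  then have "w ^ degree L = 1" using cancel[OF coeffs[of 0]] \<open>coeff c 0 = w ^ degree L\<close> by simp
  moreover have "degree L \<le> m" using right_dvd_degree[OF L(1) degree_tm_poly(2)[OF m0]] degree_tm_poly(1)[OF m0] by simp
  ultimately show ?thesis using wprim[of "degree L"] L(3) by fastforce
qed

lemma minimal_right_divisor_degree_dvd:
  assumes w: "w \<in> fixed_center \<sigma>" "primitive_root m w" and m0: "0 < m" and d: "d \<noteq> 0"
    and h0: "right_dvd h0 (tm_poly m d)" "0 < degree h0"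
    and min: "\<And>r. right_dvd r (tm_poly m d) \<Longrightarrow> degree r = 0 \<or> degree h0 \<le> degree r"
  shows "degree h0 dvd m"
proof -
  define k where "k = degree h0"
  have w0: "w \<noteq> 0" and wm: "w ^ m = 1"
    using w(2) m0 unfolding primitive_root_def by (metis power_0_left zero_neq_one less_not_refl, blast)
  define hs where "hs i = (tscale w ^^ i) h0" for i
  have "(tscale w ^^ i) (tm_poly m d) = tm_poly m d" for i
    by (induction i) (simp_all add: tscale_tm_poly[OF wm])
  then have hs_f: "right_dvd (hs i) (tm_poly m d)" for i
    using right_dvd_funpow_tscale[OF w(1) h0(1), of i] unfolding hs_def by simp
  have hs_deg: "degree (hs i) = k" for i
    unfolding hs_def k_def by (induction i) (simp_all add: degree_tscale[OF w0])
  have hs_min: "degree r = 0 \<or> k \<le> degree r" if "right_dvd r (hs i)" for i r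
    using min right_dvd_trans[OF that hs_f] unfolding k_def by blast
  have hs_nonzero: "hs i \<noteq> 0" for i using hs_deg[of i] h0(2) unfolding k_def by auto
  obtain L where L: "L \<noteq> 0" "\<forall>i\<le>m - 1. right_dvd (hs i) L"
    "\<forall>p. (\<forall>i\<le>m - 1. right_dvd (hs i) p) \<longrightarrow> right_dvd L p" "k dvd degree L"
    using common_left_multiples_generator[of hs k "m - 1"] hs_nonzero hs_deg hs_min by blast
  \<comment> \<open>\<open>t \<mapsto> w t\<close> permutes the \<open>hs i\<close> cyclically, so \<open>tscale w L\<close> is again a common multiple\<close>
  have shift: "right_dvd (tscale w a) (tscale w L)" if "right_dvd a L" for a
    using right_dvd_funpow_tscale[OF w(1) that, of 1] by simp
  have wrap: "tscale w (hs (m - 1)) = hs 0"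
  proof -
    have "tscale w (hs (m - 1)) = (tscale w ^^ Suc (m - 1)) h0" by (simp add: hs_def)
    also have "Suc (m - 1) = m" using m0 by simp
    finally show ?thesis using funpow_tscale_root_of_unity[OF wm] by (simp add: hs_def)
  qed
  have "right_dvd (hs i) (tscale w L)" if "i \<le> m - 1" for i
  proof (cases i)
    case 0
    then show ?thesis using shift[of "hs (m - 1)"] L(2) wrap by simp
  next
    case (Suc j)
    then show ?thesis using shift[of "hs j"] L(2) that by (simp add: hs_def)
  qed
  then have "right_dvd L (tscale w L)" using L(3) by blast
  moreover have "right_dvd L (tm_poly m d)" using L(3) hs_f by blast
  moreover have "k \<le> degree L" using right_dvd_degree[of "hs 0" L] L(1,2) hs_deg by simp
  ultimately have "degree L = m"
    using tscale_invariant_right_divisor[OF w m0 d, of L] L(1) h0(2) unfolding k_def by simp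
  then show ?thesis using L(4) unfolding k_def by simp
qed

lemma tm_poly_tirreducible:
  assumes m: "prime m" and w: "w \<in> fixed_center \<sigma>" "primitive_root m w" and d: "d \<noteq> 0"
    and not_norm: "\<forall>z. d \<noteq> twisted_norm \<sigma> m z"
  shows "tirreducible (tm_poly m d)"
proof -
  define f where "f = tm_poly m d"
  have m0: "0 < m" using m prime_gt_0_nat by blast
  have f: "degree f = m" "f \<noteq> 0" using degree_tm_poly[OF m0] f_def by auto
  have "tunit g \<or> tunit h" if gh: "f = tmult g h" for g h
  proof (rule ccontr)
    assume "\<not> ?thesis"
    then have "g \<noteq> 0" "h \<noteq> 0" "degree g \<noteq> 0" "degree h \<noteq> 0"
      using gh f(2) by (auto simp: tunit_def)
    then have h_deg: "0 < degree h" "degree h < m" using gh f by (simp_all add: degree_tmult)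
    define RF where "RF = {r. right_dvd r f \<and> 0 < degree r}"
    have "h \<in> RF" unfolding RF_def right_dvd_def using gh h_deg by auto
    define k where "k = (LEAST n. \<exists>r\<in>RF. degree r = n)"
    obtain h0 where h0: "h0 \<in> RF" "degree h0 = k"
      using LeastI_ex[of "\<lambda>n. \<exists>r\<in>RF. degree r = n"] \<open>h \<in> RF\<close> unfolding k_def by blast
    have k_min: "degree r = 0 \<or> k \<le> degree r" if "right_dvd r f" for r
      using that unfolding k_def RF_def by (metis (mono_tags, lifting) Least_le gr0I mem_Collect_eq)
    have "k \<le> degree h" using \<open>h \<in> RF\<close> k_min unfolding RF_def by fastforce
    then have k: "0 < k" "k < m" using h0 h_deg unfolding RF_def by auto
    have "k dvd m"
      using minimal_right_divisor_degree_dvd[OF w m0 d, of h0] h0 k_min unfolding RF_def f_def by simp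
    then have "k = 1" using k m unfolding prime_nat_iff by auto
    then show False using norm_if_linear_right_factor[of h0 m d] h0 not_norm unfolding RF_def f_def by auto
  qed
  then show ?thesis using f m0 unfolding tirreducible_def f_def[symmetric] by (auto simp: tunit_def)
qed

end

section \<open>Transfer to coefficient functions\<close>

lemma tpoly_coeff: "tpoly (coeff p)"
  unfolding tpoly_def
  by (rule finite_subset[of _ "{..degree p}"]) (auto intro: le_degree)

lemma coeff_Abs_poly_tpoly: "tpoly f \<Longrightarrow> coeff (Abs_poly f) = f"
  unfolding tpoly_def
  by (metis (mono_tags, lifting) coeff_Abs_poly finite_nat_set_iff_bounded_le mem_Collect_eq not_le)

lemma SA_carrier_Abs_poly:
  assumes "x \<in> SA_carrier m" "0 < m"
  shows "coeff (Abs_poly x) = x" "degree (Abs_poly x) < m"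
proof -
  show c: "coeff (Abs_poly x) = x"
    using assms unfolding SA_carrier_def by (intro coeff_Abs_poly[where n="m - 1"]) auto
  have "degree (Abs_poly x) \<le> m - 1" by (rule degree_le) (use assms c in \<open>auto simp: SA_carrier_def\<close>)
  then show "degree (Abs_poly x) < m" using assms(2) by simp
qed

lemma coeff_in_SA_carrier: "degree p < m \<Longrightarrow> coeff p \<in> SA_carrier m"
  unfolding SA_carrier_def by (auto intro: coeff_eq_0)

lemma tp_add_coeff: "tp_add (coeff p) (coeff q) = coeff (p + q)"
  unfolding tp_add_def by auto

lemma tp_const_coeff: "tp_const c = coeff (monom c 0)"
  unfolding tp_const_def by (auto simp: coeff_monom)

lemma SA_carrier_bij_betw_coeff:
  assumes "0 < m"
  shows "bij_betw coeff {p. degree p < m} (SA_carrier m)"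
proof (rule bij_betw_imageI)
  show "inj_on coeff {p. degree p < m}" by (rule inj_onI) (simp add: coeff_inject)
  show "coeff ` {p. degree p < m} = SA_carrier m"
    using SA_carrier_Abs_poly[OF _ assms] coeff_in_SA_carrier by (auto intro!: image_eqI)
qed

lemma bij_betw_SA_carrier_transfer:
  assumes m0: "0 < m" and T: "bij_betw T {p. degree p < m} {p. degree p < m}"
    and S: "\<And>p. degree p < m \<Longrightarrow> S (coeff p) = coeff (T p)"
  shows "bij_betw S (SA_carrier m) (SA_carrier m)"
proof -
  let ?inv = "the_inv_into {p. degree p < m} coeff"
  have coeff_bij: "bij_betw coeff {p. degree p < m} (SA_carrier m)"
    by (rule SA_carrier_bij_betw_coeff[OF m0])
  have "bij_betw (coeff \<circ> (T \<circ> ?inv)) (SA_carrier m) (SA_carrier m)"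
    by (intro bij_betw_trans[OF bij_betw_trans[OF bij_betw_the_inv_into[OF coeff_bij] T] coeff_bij])
  moreover have "(coeff \<circ> (T \<circ> ?inv)) x = S x" if "x \<in> SA_carrier m" for x
  proof -
    have "degree (?inv x) < m" "coeff (?inv x) = x"
      using that bij_betw_the_inv_into[OF coeff_bij] f_the_inv_into_f_bij_betw[OF coeff_bij]
      by (auto dest: bij_betwE)
    then show ?thesis using S[of "?inv x"] by simp
  qed
  ultimately show ?thesis using bij_betw_cong by blast
qed

context ring_automorphism
begin

lemma tp_mul_coeff: "tp_mul \<sigma> (coeff p) (coeff q) = coeff (tmult p q)"
  unfolding tp_mul_def by (auto simp: coeff_tmult)

lemma tm_minus_coeff: "tm_minus m d = coeff (tm_poly m d)"
  unfolding tm_minus_def by (auto simp: coeff_tm_poly)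

lemma tp_rrem_coeff:
  assumes m0: "0 < m"
  shows "tp_rrem \<sigma> m d (coeff p) = coeff (trem m d p)"
  unfolding tp_rrem_def
proof (rule the_equality)
  obtain Q where Q: "p = tmult Q (tm_poly m d) + trem m d p" using trem[OF m0] by blast
  show "coeff (trem m d p) \<in> SA_carrier m \<and>
      (\<exists>q. tpoly q \<and> coeff p = tp_add (tp_mul \<sigma> q (tm_minus m d)) (coeff (trem m d p)))"
    using trem(1)[OF m0] Q tpoly_coeff
    by (metis coeff_in_SA_carrier tm_minus_coeff tp_mul_coeff tp_add_coeff)
next
  fix r assume r: "r \<in> SA_carrier m \<and> (\<exists>q. tpoly q \<and> coeff p = tp_add (tp_mul \<sigma> q (tm_minus m d)) r)"
  then obtain q where q: "tpoly q" "coeff p = tp_add (tp_mul \<sigma> q (tm_minus m d)) r" by blast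
  have "coeff p = coeff (tmult (Abs_poly q) (tm_poly m d) + Abs_poly r)"
    using q SA_carrier_Abs_poly(1)[OF _ m0] r coeff_Abs_poly_tpoly
    by (metis tm_minus_coeff tp_mul_coeff tp_add_coeff)
  then have "trem m d p = Abs_poly r"
    using trem_eqI[OF m0] SA_carrier_Abs_poly(2)[OF _ m0] r by (metis coeff_inject)
  then show "r = coeff (trem m d p)" using SA_carrier_Abs_poly(1)[OF _ m0] r by metis
qed

lemma SA_mult_coeff: "0 < m \<Longrightarrow> SA_mult \<sigma> m d (coeff p) (coeff q) = coeff (trem m d (tmult p q))"
  unfolding SA_mult_def tp_mul_coeff by (rule tp_rrem_coeff)

lemma tp_unit_coeff_iff: "tp_unit \<sigma> (coeff g) \<longleftrightarrow> tunit g"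
proof
  assume "tp_unit \<sigma> (coeff g)"
  then obtain g' where g': "tpoly g'" "tp_mul \<sigma> g' (coeff g) = tp_const 1" unfolding tp_unit_def by blast
  then have "coeff (tmult (Abs_poly g') g) = coeff tone"
    by (metis coeff_Abs_poly_tpoly tp_mul_coeff tp_const_coeff)
  then show "tunit g" by (intro tunit_if_left_inverse[of "Abs_poly g'"]) (simp add: coeff_inject)
next
  assume "tunit g"
  then show "tp_unit \<sigma> (coeff g)" unfolding tp_unit_def
    by (intro conjI tpoly_coeff exI[of _ "coeff (monom (inverse (coeff g 0)) 0)"])
      (simp_all add: tp_mul_coeff tp_const_coeff tunit_inverse)
qed

lemma tirreducible_if_tp_irreducible:
  assumes "0 < m" "tp_irreducible \<sigma> (tm_minus m d)"
  shows "tirreducible (tm_poly m d)"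
  unfolding tirreducible_def
proof (intro conjI allI impI)
  show "tm_poly m d \<noteq> 0" using degree_tm_poly[OF assms(1)] by simp
  show "\<not> tunit (tm_poly m d)"
    using assms(2) unfolding tp_irreducible_def tm_minus_coeff tp_unit_coeff_iff by simp
  fix g h assume "tm_poly m d = tmult g h"
  then have "tm_minus m d = tp_mul \<sigma> (coeff g) (coeff h)" by (simp add: tm_minus_coeff tp_mul_coeff)
  then have "tp_unit \<sigma> (coeff g) \<or> tp_unit \<sigma> (coeff h)"
    using assms(2) tpoly_coeff unfolding tp_irreducible_def by blast
  then show "tunit g \<or> tunit h" by (simp add: tp_unit_coeff_iff)
qed

lemma SA_division_if_tirreducible:
  assumes ord: "order_on_center \<sigma> m" and fd: "fin_dim_over_center TYPE('a)"
    and irr: "tirreducible (tm_poly m d)"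
  shows "SA_division \<sigma> m d"
  unfolding SA_division_def
proof (intro ballI impI conjI)
  have m0: "0 < m" using ord unfolding order_on_center_def by simp
  fix a :: "nat \<Rightarrow> 'a" assume a: "a \<in> SA_carrier m" "a \<noteq> (\<lambda>_. 0)"
  define A where "A = Abs_poly a"
  have A: "coeff A = a" "degree A < m" using SA_carrier_Abs_poly[OF a(1) m0] A_def by auto
  have "A \<noteq> 0"
  proof
    assume "A = 0"
    then have "a = (\<lambda>_. 0)" using A(1) by auto
    then show False using a(2) by contradiction
  qed
  show "bij_betw (\<lambda>x. SA_mult \<sigma> m d a x) (SA_carrier m) (SA_carrier m)"
    using A by (intro bij_betw_SA_carrier_transfer[OF m0 trem_tmult_bij(1)[OF m0 ord fd irr A(2) \<open>A \<noteq> 0\<close>]])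
      (metis SA_mult_coeff[OF m0])
  show "bij_betw (\<lambda>x. SA_mult \<sigma> m d x a) (SA_carrier m) (SA_carrier m)"
    using A by (intro bij_betw_SA_carrier_transfer[OF m0 trem_tmult_bij(2)[OF m0 ord fd irr A(2) \<open>A \<noteq> 0\<close>]])
      (metis SA_mult_coeff[OF m0])
qed

lemma SA_free_rank:
  assumes m0: "0 < m"
  shows "SA_free_rank \<sigma> m d m"
  unfolding SA_free_rank_def
proof (intro exI[of _ "\<lambda>i. coeff (monom 1 i)"] conjI allI impI ballI)
  fix i :: nat assume "i < m"
  then show "coeff (monom 1 i) \<in> SA_carrier m"
    by (intro coeff_in_SA_carrier) (meson le_less_trans degree_monom_le)
next
  fix x :: "nat \<Rightarrow> 'a" assume x: "x \<in> SA_carrier m"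
  have const_monom: "SA_mult \<sigma> m d (tp_const c) (coeff (monom 1 i)) = coeff (monom c i)" if "i < m" for c i
    using that trem_small[OF m0, of "monom c i"]
    by (simp add: tp_const_coeff SA_mult_coeff[OF m0] tmult_monom_monom le_less_trans[OF degree_monom_le])
  have sum: "(\<lambda>n. \<Sum>i<m. SA_mult \<sigma> m d (tp_const (c i)) (coeff (monom 1 i)) n)
      = (\<lambda>n. if n < m then c n else 0)" for c
  proof
    fix n
    have "(\<Sum>i<m. SA_mult \<sigma> m d (tp_const (c i)) (coeff (monom 1 i)) n) = (\<Sum>i<m. if n = i then c i else 0)"
      by (intro sum.cong refl) (simp add: const_monom coeff_monom)
    then show "(\<Sum>i<m. SA_mult \<sigma> m d (tp_const (c i)) (coeff (monom 1 i)) n) = (if n < m then c n else 0)"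
      by (simp add: sum.delta)
  qed
  show "\<exists>!c. (\<forall>i\<ge>m. c i = 0) \<and> x = (\<lambda>n. \<Sum>i<m. SA_mult \<sigma> m d (tp_const (c i)) (coeff (monom 1 i)) n)"
    unfolding sum
  proof (rule ex1I[of _ x])
    show "(\<forall>i\<ge>m. x i = 0) \<and> x = (\<lambda>n. if n < m then x n else 0)"
      using x unfolding SA_carrier_def by (auto simp: fun_eq_iff)
    fix c assume "(\<forall>i\<ge>m. c i = 0) \<and> x = (\<lambda>n. if n < m then c n else 0)"
    then show "c = x" by (auto simp: fun_eq_iff not_less)
  qed
qed

end

definition coeff_scale :: "'a::division_ring \<Rightarrow> (nat \<Rightarrow> 'a) \<Rightarrow> nat \<Rightarrow> 'a" where
  "coeff_scale w x = (\<lambda>n. w ^ n * x n)"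

lemma funpow_coeff_scale: "(coeff_scale w ^^ k) x = (\<lambda>n. (w ^ n) ^ k * x n)"
  by (induction k) (auto simp: coeff_scale_def mult.assoc)

lemma coeff_scale_coeff: "coeff_scale w (coeff p) = coeff (tscale w p)"
  unfolding coeff_scale_def by auto

lemma coeff_scale_tp_const: "coeff_scale w (tp_const c) = tp_const c"
  unfolding coeff_scale_def tp_const_def by auto

lemma bij_betw_coeff_scale:
  assumes "w \<noteq> 0"
  shows "bij_betw (coeff_scale w) (SA_carrier m) (SA_carrier m)"
proof (rule bij_betw_byWitness[where f'="\<lambda>x n. inverse (w ^ n) * x n"])
  have "w ^ n \<noteq> 0" for n using assms by simp
  then have "inverse (w ^ n) * (w ^ n * y) = y" "w ^ n * (inverse (w ^ n) * y) = y" for n y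
    by (simp_all add: mult.assoc[symmetric])
  then show "\<forall>x\<in>SA_carrier m. (\<lambda>n. inverse (w ^ n) * coeff_scale w x n) = x"
    "\<forall>x\<in>SA_carrier m. coeff_scale w (\<lambda>n. inverse (w ^ n) * x n) = x"
    unfolding coeff_scale_def by simp_all
qed (auto simp: coeff_scale_def SA_carrier_def)

context ring_automorphism
begin

lemma SA_aut_coeff_scale:
  assumes m0: "0 < m" and w: "w \<in> fixed_center \<sigma>" "w ^ m = 1"
  shows "SA_aut \<sigma> m d (coeff_scale w)"
proof -
  have "w \<noteq> 0" using w(2) m0 by (metis power_0_left zero_neq_one less_not_refl)
  have mult: "coeff_scale w (SA_mult \<sigma> m d x y) = SA_mult \<sigma> m d (coeff_scale w x) (coeff_scale w y)"
    if xy: "x \<in> SA_carrier m" "y \<in> SA_carrier m" for x y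
  proof -
    obtain p q where "x = coeff p" "y = coeff q"
      using SA_carrier_Abs_poly(1)[OF xy(1) m0] SA_carrier_Abs_poly(1)[OF xy(2) m0] by metis
    then show ?thesis
      by (simp add: SA_mult_coeff[OF m0] coeff_scale_coeff trem_tscale[OF m0 w] tscale_tmult[OF w(1)])
  qed
  have const: "tp_const c \<in> SA_carrier m" for c using m0 unfolding tp_const_def SA_carrier_def by auto
  show ?thesis
    unfolding SA_aut_def
  proof (intro conjI ballI)
    show "bij_betw (coeff_scale w) (SA_carrier m) (SA_carrier m)" by (rule bij_betw_coeff_scale) fact
    fix x y :: "nat \<Rightarrow> 'a" assume "x \<in> SA_carrier m" "y \<in> SA_carrier m"
    then show "coeff_scale w (tp_add x y) = tp_add (coeff_scale w x) (coeff_scale w y)"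
      "coeff_scale w (SA_mult \<sigma> m d x y) = SA_mult \<sigma> m d (coeff_scale w x) (coeff_scale w y)"
      using mult by (simp_all add: coeff_scale_def tp_add_def distrib_left)
  next
    fix c :: 'a and x :: "nat \<Rightarrow> 'a" assume "x \<in> SA_carrier m"
    then show "coeff_scale w (SA_mult \<sigma> m d (tp_const c) x) = SA_mult \<sigma> m d (tp_const c) (coeff_scale w x)"
      using mult[OF const] by (simp add: coeff_scale_tp_const)
  qed
qed

lemma nonassoc_cyclic_ext_if_tirreducible:
  assumes fd: "fin_dim_over_center TYPE('a)" and ord: "order_on_center \<sigma> m"
    and w: "w \<in> fixed_center \<sigma>" "primitive_root m w" and irr: "tirreducible (tm_poly m d)"
  shows "nonassoc_cyclic_ext \<sigma> m d"
proof -
  have m0: "0 < m" using ord unfolding order_on_center_def by simp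
  have wm: "w ^ m = 1" and wprim: "\<And>k. 0 < k \<Longrightarrow> k < m \<Longrightarrow> w ^ k \<noteq> 1"
    using w(2) unfolding primitive_root_def by auto
  have fixes_D: "\<forall>k c. (coeff_scale w ^^ k) (tp_const c) = tp_const c"
  proof (intro allI)
    fix k c show "(coeff_scale w ^^ k) (tp_const c) = tp_const c"
      by (induction k) (simp_all add: coeff_scale_tp_const)
  qed
  have "(w ^ n) ^ m = 1" for n by (metis wm power_mult power_mult_distrib mult.commute power_one)
  then have period: "\<forall>x\<in>SA_carrier m. (coeff_scale w ^^ m) x = x" by (simp add: funpow_coeff_scale)
  have order: "\<exists>x\<in>SA_carrier m. (coeff_scale w ^^ k) x \<noteq> x" if k: "0 < k \<and> k < m" for k
  proof
    have "degree (monom (1::'a) 1) \<le> 1" by (rule degree_monom_le)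
    then have "degree (monom (1::'a) 1) < m" using k by linarith
    then show "coeff (monom (1::'a) 1) \<in> SA_carrier m" by (rule coeff_in_SA_carrier)
    have "(coeff_scale w ^^ k) (coeff (monom 1 1)) 1 \<noteq> coeff (monom 1 1) 1"
      using wprim[of k] k by (simp add: funpow_coeff_scale)
    then show "(coeff_scale w ^^ k) (coeff (monom 1 1)) \<noteq> coeff (monom 1 1)" by (rule contrapos_nn) simp
  qed
  have "SA_aut \<sigma> m d (coeff_scale w)" using SA_aut_coeff_scale[OF m0 w(1) wm] .
  then show ?thesis
    unfolding nonassoc_cyclic_ext_def
    using SA_division_if_tirreducible[OF ord fd irr] SA_free_rank[OF m0] fixes_D period order by blast
qed

end

theorem corollary3p3:
  fixes \<sigma> :: "'a::division_ring \<Rightarrow> 'a" and m :: nat and d :: 'a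
  assumes "fin_dim_over_center TYPE('a)"
    and "ring_aut \<sigma>"
    and "order_on_center \<sigma> m"
    and "d \<notin> fixed_center \<sigma>"
    and "\<exists>w\<in>fixed_center \<sigma>. primitive_root m w"
  shows "(tp_irreducible \<sigma> (tm_minus m d) \<longrightarrow> nonassoc_cyclic_ext \<sigma> m d)
       \<and> (prime m \<and> (\<forall>z. d \<noteq> twisted_norm \<sigma> m z) \<longrightarrow> nonassoc_cyclic_ext \<sigma> m d)"
proof -
  interpret ring_automorphism \<sigma> using assms(2) unfolding ring_aut_def by unfold_locales auto
  have m0: "0 < m" using assms(3) unfolding order_on_center_def by simp
  obtain w where w: "w \<in> fixed_center \<sigma>" "primitive_root m w" using assms(5) by blast
  have "d \<noteq> 0" using assms(4) subdivring_0[OF subdivring_fixed_center] by auto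
  have "tirreducible (tm_poly m d) \<Longrightarrow> nonassoc_cyclic_ext \<sigma> m d"
    by (rule nonassoc_cyclic_ext_if_tirreducible[OF assms(1,3) w])
  then show ?thesis
    using tirreducible_if_tp_irreducible[OF m0] tm_poly_tirreducible[OF _ w \<open>d \<noteq> 0\<close>] by blast
qed

end
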